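(* Let $h\in\mathfrak M$ and $\delta\in\{\ast,0,\gamma^{(H)}\}$ with $t\in\mathbb T_\delta$. Let $\mathcal A_h\oplus\mathcal A_{\mu(h)}$ be a non-degenerate $\mathcal K_h\oplus\mathcal K_{\mu(h)}$-submodule of $\mathcal J_h\oplus\mathcal J_{\mu(h)}$, where $\mathcal A_h$ is a $\mathcal K_h$-subspace of $\mathcal J_h$ and $\mathcal A_{\mu(h)}$ is a $\mathcal K_{\mu(h)}$-subspace of $\mathcal J_{\mu(h)}$ with $\dim_{\mathcal K_h}\mathcal A_h=\dim_{\mathcal K_{\mu(h)}}\mathcal A_{\mu(h)}=r\ge2$. Then the number of non-trivial isotropic elements in $\mathcal A_h\oplus\mathcal A_{\mu(h)}$ is $(q^{(r-1)d_h}-1)(q^{rd_h}-1)$.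
   Context: Standing setup. Let $q$ be a power of a prime $p$, $n\ge1$ with $\gcd(n,q)=1$, $t\ge2$. $\mathcal R_n^{(q)}=\mathbb F_q[X]/\langle X^n-1\rangle\subseteq\mathcal R_n^{(q^t)}=\mathbb F_{q^t}[X]/\langle X^n-1\rangle$. $C^{(q)}_\ell=\{\ell q^j\bmod n\}$; $\ell_0=0,\dots,\ell_{s-1}$ representatives of the $q$-cyclotomic cosets mod $n$; $d_i=|C^{(q)}_{\ell_i}|$; $f_i(X)=\prod_{k\in C^{(q)}_{\ell_i}}(X-\eta^k)$ for a primitive $n$th root of unity $\eta$. $\mathcal K_i$ is the ideal of $\mathcal R_n^{(q)}$ generated by $(X^n-1)/f_i$ (a field $\cong\mathbb F_{q^{d_i}}$), $\mathcal J_i$ the ideal of $\mathcal R_n^{(q^t)}$ generated by $(X^n-1)/f_i$ (a $t$-dimensional $\mathcal K_i$-space). $\mu$ is the involution of $\{0,\dots,s-1\}$ with $C^{(q)}_{-\ell_i}=C^{(q)}_{\ell_{\mu(i)}}$, and $\mathfrak M$ contains exactly one element of each 2-cycle of $\mu$. $\tau_{q^u,v}(\sum a_iX^i)=\sum a_i^{q^u}X^{vi}$. Forms: $[a,b]_0=\sum_{w=0}^{t-1}\tau_{q^w,1}(a\tau_{1,-1}(b))$ (any $t\ge2$); $[a,b]_\ast=\sum_{u=0}^{t-1}\tau_{q^u,1}(a\sum_{w=1}^{t-1}\tau_{q^w,-1}(b))$ ($t\not\equiv1\pmod p$); for $t$ even, $t=2^em$ ($m$ odd), nonzero $\gamma\in\mathbb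 F_{q^{2^e}}$ with $\gamma+\gamma^{q^{2^{e-1}}}=0$, $[a,b]_\gamma=\sum_{w=0}^{t-1}\tau_{q^w,1}(\gamma a\tau_{q^{t/2},-1}(b))$. $\mathbb T_\ast=\{t\ge2:t\not\equiv1\pmod p\}$, $\mathbb T_0=\{t\ge2\}$, $\mathbb T_{\gamma^{(H)}}=\{t\ge2\text{ even}\}$. Module setup. Fix $h\in\mathfrak M$. $\mathcal J_h\oplus\mathcal J_{\mu(h)}$ is a module over the ring $\mathcal K_h\oplus\mathcal K_{\mu(h)}$ via $(u+v)(a+b)=ua+vb$. For $\delta\in\{\ast,0\}$ use $[\cdot,\cdot]_\delta$ restricted to $\mathcal J_h\oplus\mathcal J_{\mu(h)}$; for $\delta=\gamma^{(H)}$ fix $0\ne\vartheta\in\mathcal K_h$, set $\chi=\vartheta-\tau_{1,-1}(\vartheta)$ and $[x,y]_{\gamma^{(H)}}=\chi[x,y]_\gamma$. The submodule $\mathcal A_h\oplus\mathcal A_{\mu(h)}$ is non-degenerate if no nonzero element of it is $[\cdot,\cdot]_\delta$-orthogonal to all of it. A nonzero element $x$ is isotropic if $[x,x]_\delta=0$; $a+b$ ($a\in\mathcal J_h$, $b\in\mathcal J_{\mu(h)}$) is non-trivial if $a\ne0$ and $b\ne0$. *)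

theory Defs
  imports "HOL-Computational_Algebra.Computational_Algebra"
begin

text \<open>All objects live inside one ambient finite field 'b (of order q^N with t dvd N)
that contains F_{q^t} and a primitive n-th root of unity eta.\<close>

definition Fq :: "nat \<Rightarrow> 'b::field set" where
  "Fq Q = {x. x ^ Q = x}"

definition xn1 :: "nat \<Rightarrow> 'b::field poly" where
  "xn1 n = monom 1 n - 1"

text \<open>R_n^{(Q)} = F_Q[X]/<X^n-1>, canonical representatives of degree < n.\<close>
definition Rn :: "nat \<Rightarrow> nat \<Rightarrow> 'b::field poly set" where
  "Rn Q n = {a. degree a < n \<and> (\<forall>i. coeff a i \<in> Fq Q)}"

definition rmult :: "nat \<Rightarrow> 'b::field poly \<Rightarrow> 'b poly \<Rightarrow> 'b poly" where
  "rmult n a b = (a * b) mod xn1 n"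

definition tau :: "nat \<Rightarrow> nat \<Rightarrow> nat \<Rightarrow> int \<Rightarrow> 'b::field poly \<Rightarrow> 'b poly" where
  "tau q n u v a = (\<Sum>i<n. monom (coeff a i ^ (q ^ u)) (nat ((v * int i) mod int n)))"

definition cyc :: "nat \<Rightarrow> nat \<Rightarrow> int \<Rightarrow> nat set" where
  "cyc q n l = {nat ((l * int q ^ j) mod int n) | j. True}"

definition primitive_root :: "nat \<Rightarrow> 'b::field \<Rightarrow> bool" where
  "primitive_root n \<eta> \<longleftrightarrow> \<eta> ^ n = 1 \<and> (\<forall>k. 0 < k \<and> k < n \<longrightarrow> \<eta> ^ k \<noteq> 1)"

definition cyc_reps :: "nat \<Rightarrow> nat \<Rightarrow> nat list \<Rightarrow> bool" where
  "cyc_reps q n ls \<longleftrightarrow> ls \<noteq> [] \<and> ls ! 0 = 0 \<and> (\<forall>i<length ls. ls ! i < n) \<and>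
     (\<forall>i<length ls. \<forall>j<length ls. i \<noteq> j \<longrightarrow> cyc q n (int (ls ! i)) \<noteq> cyc q n (int (ls ! j))) \<and>
     (\<forall>x<n. \<exists>i<length ls. x \<in> cyc q n (int (ls ! i)))"

definition fpoly :: "nat \<Rightarrow> nat \<Rightarrow> 'b::field \<Rightarrow> nat list \<Rightarrow> nat \<Rightarrow> 'b poly" where
  "fpoly q n \<eta> ls i = (\<Prod>k\<in>cyc q n (int (ls ! i)). [:- (\<eta> ^ k), 1:])"

definition dd :: "nat \<Rightarrow> nat \<Rightarrow> nat list \<Rightarrow> nat \<Rightarrow> nat" where
  "dd q n ls i = card (cyc q n (int (ls ! i)))"

definition mu :: "nat \<Rightarrow> nat \<Rightarrow> nat list \<Rightarrow> nat \<Rightarrow> nat" where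
  "mu q n ls i = (THE j. j < length ls \<and> cyc q n (- int (ls ! i)) = cyc q n (int (ls ! j)))"

definition frakM :: "nat \<Rightarrow> nat \<Rightarrow> nat list \<Rightarrow> nat set \<Rightarrow> bool" where
  "frakM q n ls M \<longleftrightarrow> M \<subseteq> {i. i < length ls \<and> mu q n ls i \<noteq> i} \<and>
     (\<forall>i<length ls. mu q n ls i \<noteq> i \<longrightarrow> (i \<in> M \<longleftrightarrow> mu q n ls i \<notin> M))"

definition Kid :: "nat \<Rightarrow> nat \<Rightarrow> 'b::field \<Rightarrow> nat list \<Rightarrow> nat \<Rightarrow> 'b poly set" where
  "Kid q n \<eta> ls i = {rmult n c (xn1 n div fpoly q n \<eta> ls i) | c. c \<in> Rn q n}"

definition Jid :: "nat \<Rightarrow> nat \<Rightarrow> nat \<Rightarrow> 'b::field \<Rightarrow> nat list \<Rightarrow> nat \<Rightarrow> 'b poly set" where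
  "Jid q t n \<eta> ls i = {rmult n c (xn1 n div fpoly q n \<eta> ls i) | c. c \<in> Rn (q ^ t) n}"

definition form0 :: "nat \<Rightarrow> nat \<Rightarrow> nat \<Rightarrow> 'b::field poly \<Rightarrow> 'b poly \<Rightarrow> 'b poly" where
  "form0 q t n a b = (\<Sum>w<t. tau q n w 1 (rmult n a (tau q n 0 (-1) b)))"

definition formstar :: "nat \<Rightarrow> nat \<Rightarrow> nat \<Rightarrow> 'b::field poly \<Rightarrow> 'b poly \<Rightarrow> 'b poly" where
  "formstar q t n a b = (\<Sum>u<t. tau q n u 1 (rmult n a (\<Sum>w\<in>{1..<t}. tau q n w (-1) b)))"

definition formgamma :: "nat \<Rightarrow> nat \<Rightarrow> nat \<Rightarrow> 'b::field \<Rightarrow> 'b poly \<Rightarrow> 'b poly \<Rightarrow> 'b poly" where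
  "formgamma q t n \<gamma> a b = (\<Sum>w<t. tau q n w 1 (rmult n (smult \<gamma> a) (tau q n (t div 2) (-1) b)))"

definition formH :: "nat \<Rightarrow> nat \<Rightarrow> nat \<Rightarrow> 'b::field \<Rightarrow> 'b poly \<Rightarrow> 'b poly \<Rightarrow> 'b poly \<Rightarrow> 'b poly" where
  "formH q t n \<gamma> \<theta> a b = rmult n (\<theta> - tau q n 0 (-1) \<theta>) (formgamma q t n \<gamma> a b)"

datatype delta = DStar | DZero | DGammaH

definition bform :: "delta \<Rightarrow> nat \<Rightarrow> nat \<Rightarrow> nat \<Rightarrow> 'b::field \<Rightarrow> 'b poly \<Rightarrow> 'b poly \<Rightarrow> 'b poly \<Rightarrow> 'b poly" where
  "bform \<delta> q t n \<gamma> \<theta> a b = (case \<delta> of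
      DStar \<Rightarrow> formstar q t n a b
    | DZero \<Rightarrow> form0 q t n a b
    | DGammaH \<Rightarrow> formH q t n \<gamma> \<theta> a b)"

definition Tdelta :: "delta \<Rightarrow> nat \<Rightarrow> nat \<Rightarrow> bool" where
  "Tdelta \<delta> p t = (case \<delta> of
      DStar \<Rightarrow> t \<ge> 2 \<and> t mod p \<noteq> 1 mod p
    | DZero \<Rightarrow> t \<ge> 2
    | DGammaH \<Rightarrow> t \<ge> 2 \<and> even t)"

definition ksubspace :: "nat \<Rightarrow> 'b::field poly set \<Rightarrow> 'b poly set \<Rightarrow> 'b poly set \<Rightarrow> bool" where
  "ksubspace n K J A \<longleftrightarrow> A \<subseteq> J \<and> 0 \<in> A \<and> (\<forall>x\<in>A. \<forall>y\<in>A. x + y \<in> A) \<and>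
     (\<forall>c\<in>K. \<forall>x\<in>A. rmult n c x \<in> A)"

definition kdim :: "nat \<Rightarrow> 'b::field poly set \<Rightarrow> 'b poly set \<Rightarrow> nat \<Rightarrow> bool" where
  "kdim n K A r \<longleftrightarrow> (\<exists>bs. length bs = r \<and> set bs \<subseteq> A \<and>
     (\<forall>cs. length cs = r \<and> set cs \<subseteq> K \<and> (\<Sum>i<r. rmult n (cs ! i) (bs ! i)) = 0
            \<longrightarrow> (\<forall>i<r. cs ! i = 0)) \<and>
     (\<forall>a\<in>A. \<exists>cs. length cs = r \<and> set cs \<subseteq> K \<and> a = (\<Sum>i<r. rmult n (cs ! i) (bs ! i))))"

definition dsum :: "'b::field poly set \<Rightarrow> 'b poly set \<Rightarrow> 'b poly set" where
  "dsum A B = {a + b | a b. a \<in> A \<and> b \<in> B}"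

end

theory Submission
  imports Defs
begin
text \<open>
  Evaluation at the powers of \<open>\<eta>\<close> (the discrete Fourier transform) identifies \<open>\<J>\<^sub>h\<close> with
  the elements whose spectrum is supported on the cyclotomic coset of \<open>l\<^sub>h\<close> and commutes with
  the \<open>q\<^sup>t\<close>-power Frobenius, and \<open>\<J>_\<mu>(h)\<close> likewise with the coset of \<open>-l\<^sub>h\<close>. All three forms
  are Frobenius traces, so the spectrum of \<open>[x,y]\<close> at \<open>k\<close> only involves the values of \<open>x\<close> on
  the orbit of \<open>k\<close> and of \<open>y\<close> on the orbit of \<open>-k\<close>. Hence \<open>[a,a'] = [b,b'] = 0\<close> for
  \<open>a, a' \<in> \<J>\<^sub>h\<close> and \<open>b, b' \<in> \<J>_\<mu>(h)\<close>, and \<open>[b,a]\<close> vanishes iff \<open>[a,b]\<close> does, so \<open>a + b\<close>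
  is isotropic iff \<open>[a,b] = 0\<close> (in the Hermitian case the factor \<open>\<chi>\<close> has no zeros on the
  two cosets). Since \<open>[a,b]\<close> is supported on the coset of \<open>l\<^sub>h\<close> and Frobenius-equivariant, it
  vanishes iff its single value at \<open>l\<^sub>h\<close>, an element of \<open>\<bbbF>_(q^d\<^sub>h)\<close>, does.

  For fixed \<open>a \<noteq> 0\<close> the map \<open>b \<mapsto> [a,b](l\<^sub>h)\<close> is additive and semilinear over
  \<open>\<K>_\<mu>(h) \<cong> \<bbbF>_(q^d\<^sub>h)\<close>; it is nonzero by non-degeneracy, hence onto, and its kernel in
  \<open>\<A>_\<mu>(h)\<close> has \<open>q^((r-1)d\<^sub>h)\<close> elements. Each of the \<open>q^(r d\<^sub>h) - 1\<close> nonzero \<open>a \<in> \<A>\<^sub>h\<close>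
  therefore has \<open>q^((r-1)d\<^sub>h) - 1\<close> non-trivial isotropic partners, and distinct pairs give
  distinct sums.
\<close>

section \<open>Counting in finite additive groups\<close>

lemma uminus_mem_if_finite_add_closed:
  fixes A :: "'a::ab_group_add set"
  assumes "finite A" and "0 \<in> A"
    and add: "\<And>x y. x \<in> A \<Longrightarrow> y \<in> A \<Longrightarrow> x + y \<in> A"
    and x: "x \<in> A"
  shows "- x \<in> A"
proof -
  have "(\<lambda>y. y + x) ` A = A"
    by (rule endo_inj_surj) (use assms in \<open>auto intro: inj_onI\<close>)
  then obtain y where "y \<in> A" "y + x = 0" using \<open>0 \<in> A\<close> by (metis imageE)
  thus ?thesis by (metis add_eq_0_iff2)
qed

lemma card_eq_card_kernel_mult_card_image:
  fixes A :: "'a::ab_group_add set" and F :: "'a \<Rightarrow> 'c::ab_group_add"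
  assumes fin: "finite A" and z: "0 \<in> A"
    and add: "\<And>x y. x \<in> A \<Longrightarrow> y \<in> A \<Longrightarrow> x + y \<in> A"
    and hom: "\<And>x y. x \<in> A \<Longrightarrow> y \<in> A \<Longrightarrow> F (x + y) = F x + F y"
  shows "card A = card {x\<in>A. F x = 0} * card (F ` A)"
proof -
  have neg: "\<And>x. x \<in> A \<Longrightarrow> - x \<in> A"
    using uminus_mem_if_finite_add_closed[OF fin z add] by blast
  have F_neg: "F (- x) = - F x" if "x \<in> A" for x
    using hom[OF that neg[OF that]] hom[OF z z] by (simp add: eq_neg_iff_add_eq_0 add.commute)
  have fibre: "card {x\<in>A. F x = y} = card {x\<in>A. F x = 0}" if y: "y \<in> F ` A" for y
  proof -
    obtain x0 where x0: "x0 \<in> A" "F x0 = y" using y by auto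
    have shift: "x - x0 \<in> A" "F (x - x0) = F x - F x0" if "x \<in> A" for x
      using add[OF that neg[OF x0(1)]] hom[OF that neg[OF x0(1)]] F_neg[OF x0(1)] by simp_all
    have "bij_betw (\<lambda>x. x - x0) {x\<in>A. F x = y} {x\<in>A. F x = 0}"
      by (rule bij_betw_byWitness[of _ "\<lambda>x. x + x0"]) (use x0 add hom shift in auto)
    thus ?thesis by (rule bij_betw_same_card)
  qed
  have A_eq: "A = (\<Union>y\<in>F ` A. {x\<in>A. F x = y})" by auto
  have "card A = (\<Sum>y\<in>F ` A. card {x\<in>A. F x = y})"
    by (subst A_eq, rule card_UN_disjoint) (use fin in auto)
  also have "\<dots> = card {x\<in>A. F x = 0} * card (F ` A)" using fibre by simp
  finally show ?thesis .
qed


lemma sum_mem_if_add_closed: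
  assumes "0 \<in> A" and "\<And>x y. x \<in> A \<Longrightarrow> y \<in> A \<Longrightarrow> x + y \<in> A"
    and "\<And>i. i \<in> I \<Longrightarrow> f i \<in> A"
  shows "sum f I \<in> A"
  using assms by (induct I rule: infinite_finite_induct) auto

lemma sum_lessThan_shift_periodic:
  fixes f :: "nat \<Rightarrow> 'a::cancel_comm_monoid_add"
  assumes periodic: "\<And>u. f (u + t) = f u"
  shows "(\<Sum>u<t. f (u + m)) = (\<Sum>u<t. f u)"
proof (induction m)
  case (Suc m)
  let ?g = "\<lambda>u. f (u + m)"
  have "?g 0 + (\<Sum>u<t. ?g (Suc u)) = (\<Sum>u<Suc t. ?g u)"
    by (rule sum.lessThan_Suc_shift[symmetric])
  also have "\<dots> = (\<Sum>u<t. ?g u) + ?g t" by (rule sum.lessThan_Suc)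
  also have "?g t = ?g 0" using periodic[of m] by (simp add: add.commute)
  finally have "(\<Sum>u<t. ?g (Suc u)) = (\<Sum>u<t. ?g u)" by (simp add: add.commute)
  with Suc show ?case by simp
qed simp

lemma card_direct_sum_eq_sum_card:
  fixes A B :: "'a::ab_group_add set"
  assumes "finite A" "finite B"
    and unique: "\<And>a a' b b'. \<lbrakk>a \<in> A; a' \<in> A; b \<in> B; b' \<in> B; a + b = a' + b'\<rbrakk> \<Longrightarrow> a = a'"
  shows "card {a + b | a b. a \<in> A \<and> b \<in> B \<and> P a b}
      = (\<Sum>a\<in>A. card {b \<in> B. P a b})"
proof -
  define S where "S = Sigma A (\<lambda>a. {b \<in> B. P a b})"
  have "{a + b | a b. a \<in> A \<and> b \<in> B \<and> P a b} = (\<lambda>(a, b). a + b) ` S"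
    by (auto simp: S_def)
  moreover have "inj_on (\<lambda>(a, b). a + b) S"
    by (rule inj_onI) (auto simp: S_def dest: unique)
  ultimately have "card {a + b | a b. a \<in> A \<and> b \<in> B \<and> P a b} = card S"
    by (simp add: card_image)
  also have "\<dots> = (\<Sum>a\<in>A. card {b \<in> B. P a b})"
    unfolding S_def by (rule card_SigmaI) (use assms in auto)
  finally show ?thesis .
qed

lemma rmult_diff_left: "rmult n (c - c') x = rmult n c x - rmult n c' x"
  unfolding rmult_def by (simp add: left_diff_distrib poly_mod_diff_left)


lemma card_eq_power_if_kdim:
  assumes finK: "finite K"
    and K_diff: "\<And>x y. x \<in> K \<Longrightarrow> y \<in> K \<Longrightarrow> x - y \<in> K"
    and sub: "ksubspace n K J A" and dim: "kdim n K A r"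
  shows "card A = card K ^ r"
proof -
  obtain bs where bs: "length bs = r" "set bs \<subseteq> A"
    and indep: "\<forall>cs. length cs = r \<and> set cs \<subseteq> K \<and> (\<Sum>i<r. rmult n (cs ! i) (bs ! i)) = 0
                  \<longrightarrow> (\<forall>i<r. cs ! i = 0)"
    and span: "\<forall>a\<in>A. \<exists>cs. length cs = r \<and> set cs \<subseteq> K
                  \<and> a = (\<Sum>i<r. rmult n (cs ! i) (bs ! i))"
    using dim unfolding kdim_def by blast
  define L where "L = {cs. set cs \<subseteq> K \<and> length cs = r}"
  define \<Lambda> where "\<Lambda> cs = (\<Sum>i<r. rmult n (cs ! i) (bs ! i))" for cs
  have A0: "0 \<in> A" and A_add: "\<And>x y. x \<in> A \<Longrightarrow> y \<in> A \<Longrightarrow> x + y \<in> A"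
    and A_mult: "\<And>c x. c \<in> K \<Longrightarrow> x \<in> A \<Longrightarrow> rmult n c x \<in> A"
    using sub unfolding ksubspace_def by auto
  have "\<Lambda> cs \<in> A" if cs: "cs \<in> L" for cs
    unfolding \<Lambda>_def
  proof (rule sum_mem_if_add_closed[where A = A, OF A0 A_add])
    fix i assume "i \<in> {..<r}"
    hence "cs ! i \<in> K" "bs ! i \<in> A" using cs bs nth_mem by (fastforce simp: L_def)+
    thus "rmult n (cs ! i) (bs ! i) \<in> A" by (rule A_mult)
  qed
  hence "\<Lambda> ` L \<subseteq> A" by blast
  moreover have "A \<subseteq> \<Lambda> ` L" using span by (force simp: L_def \<Lambda>_def)
  moreover have "inj_on \<Lambda> L"
  proof (rule inj_onI)
    fix cs cs' assume cs: "cs \<in> L" "cs' \<in> L" and eq: "\<Lambda> cs = \<Lambda> cs'"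
    define ds where "ds = map (\<lambda>i. cs ! i - cs' ! i) [0..<r]"
    have "length ds = r" by (simp add: ds_def)
    moreover have "set ds \<subseteq> K" using cs by (auto simp: ds_def L_def intro!: K_diff)
    moreover have "(\<Sum>i<r. rmult n (ds ! i) (bs ! i)) = \<Lambda> cs - \<Lambda> cs'"
      by (simp add: \<Lambda>_def ds_def rmult_diff_left sum_subtractf)
    ultimately have "\<forall>i<r. ds ! i = 0" using indep eq by (metis diff_self)
    thus "cs = cs'" using cs by (intro nth_equalityI) (auto simp: L_def ds_def)
  qed
  ultimately have "card A = card L" by (metis card_image subset_antisym)
  also have "\<dots> = card K ^ r" unfolding L_def by (rule card_lists_length_eq[OF finK])
  finally show ?thesis .
qed

section \<open>The discrete Fourier transform\<close>

definition rootpow :: "'b::field \<Rightarrow> nat \<Rightarrow> int \<Rightarrow> 'b" where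
  "rootpow \<eta> n j = \<eta> ^ nat (j mod int n)"

text \<open>Frequencies are integers, so that \<open>-j\<close> and \<open>q j\<close> modulo \<open>n\<close>
  are at hand.\<close>

definition dft :: "'b::field \<Rightarrow> nat \<Rightarrow> 'b poly \<Rightarrow> int \<Rightarrow> 'b" where
  "dft \<eta> n x j = poly x (rootpow \<eta> n j)"

definition root_factor :: "'b::field \<Rightarrow> nat \<Rightarrow> 'b poly" where
  "root_factor \<eta> k = [:- (\<eta> ^ k), 1:]"

locale cyclotomic_setting =
  fixes p q kk n t N :: nat and \<eta> :: "'b::{field,finite}"
  assumes prime: "prime p" and kk: "kk \<ge> 1" and qdef: "q = p ^ kk" and n1: "n \<ge> 1"
    and cop: "coprime n q" and t2: "t \<ge> 2" and card: "card (UNIV :: 'b set) = q ^ N"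
    and prim: "primitive_root n \<eta>"
begin

abbreviation "\<omega> \<equiv> rootpow \<eta> n"
abbreviation "spec \<equiv> dft \<eta> n"

lemma CHAR_eq: "CHAR('b) = p"
proof -
  have "CHAR('b) > 0" by (rule finite_imp_CHAR_pos) simp
  hence pr: "prime CHAR('b)" by (rule prime_CHAR_semidom)
  have "(\<Sum>y\<in>UNIV. y + 1) = (\<Sum>y\<in>(UNIV::'b set). y)"
    by (rule sum.reindex_bij_witness[of _ "\<lambda>y. y - 1" "\<lambda>y. y + 1"]) auto
  hence "of_nat (card (UNIV::'b set)) = (0::'b)" by (simp add: sum.distrib)
  hence "CHAR('b) dvd card (UNIV::'b set)" by (simp add: of_nat_eq_0_iff_char_dvd)
  hence "CHAR('b) dvd p ^ (kk * N)" using card qdef by (simp add: power_mult)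
  hence "CHAR('b) dvd p" using pr prime_dvd_power by blast
  thus ?thesis using pr prime by (simp add: primes_dvd_imp_eq)
qed

lemma q_ge_2: "q \<ge> 2"
proof -
  have "p \<ge> 2" using prime by (rule prime_ge_2_nat)
  moreover have "p \<le> p ^ kk" using kk \<open>p \<ge> 2\<close> by (simp add: self_le_power)
  ultimately show ?thesis using qdef by simp
qed

lemma q_pos: "q > 0" using q_ge_2 by simp

lemma frobenius_add: "(x + y :: 'b) ^ (q ^ m) = x ^ (q ^ m) + y ^ (q ^ m)"
  by (rule freshmans_dream') (auto simp: CHAR_eq prime qdef power_mult[symmetric])

lemma frobenius_sum: "(sum f A :: 'b) ^ (q ^ m) = (\<Sum>i\<in>A. f i ^ (q ^ m))"
  by (rule freshmans_dream_sum') (auto simp: CHAR_eq prime qdef power_mult[symmetric])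

lemma frobenius_uminus: "(- x :: 'b) ^ (q ^ m) = - (x ^ (q ^ m))"
proof -
  have "(x + - x) ^ (q ^ m) = x ^ (q ^ m) + (- x) ^ (q ^ m)" by (rule frobenius_add)
  moreover have "(0::'b) ^ (q ^ m) = 0" using q_pos by simp
  ultimately have "0 = x ^ (q ^ m) + (- x) ^ (q ^ m)" by simp
  thus ?thesis by (simp add: eq_neg_iff_add_eq_0 add.commute)
qed

lemma frobenius_diff: "(x - y :: 'b) ^ (q ^ m) = x ^ (q ^ m) - y ^ (q ^ m)"
  using frobenius_add[of x "-y" m] frobenius_uminus[of y m] by simp

lemma frobenius1_add: "(x + y :: 'b) ^ q = x ^ q + y ^ q"
  using frobenius_add[of x y 1] by simp
lemma frobenius1_diff: "(x - y :: 'b) ^ q = x ^ q - y ^ q"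
  using frobenius_diff[of x y 1] by simp

lemma eta_pow_n: "\<eta> ^ n = 1" using prim by (simp add: primitive_root_def)

lemma eta_pow_mod: "\<eta> ^ a = \<eta> ^ (a mod n)"
proof -
  have "\<eta> ^ a = \<eta> ^ (n * (a div n) + a mod n)" by simp
  also have "\<dots> = (\<eta>^n)^(a div n) * \<eta>^(a mod n)"
    by (simp only: power_add power_mult)
  also have "\<dots> = \<eta>^(a mod n)" by (simp only: eta_pow_n power_one mult_1_left)
  finally show ?thesis .
qed

lemma eta_pow_cong: "int a mod int n = int b mod int n \<Longrightarrow> \<eta> ^ a = \<eta> ^ b"
  by (metis eta_pow_mod nat_int zmod_int)

lemma rootpow_cong: "a mod int n = b mod int n \<Longrightarrow> \<omega> a = \<omega> b"
  by (simp add: rootpow_def)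

lemma rootpow_power: "\<omega> a ^ m = \<omega> (a * int m)"
proof -
  have "\<omega> a ^ m = \<eta> ^ (nat (a mod int n) * m)" by (simp add: rootpow_def power_mult)
  also have "\<dots> = \<eta> ^ nat ((a * int m) mod int n)"
    apply (rule eta_pow_cong) using n1 by (simp add: mod_mult_left_eq)
  finally show ?thesis by (simp add: rootpow_def)
qed

lemma rootpow_of_nat: "\<omega> (int a) = \<eta> ^ a"
proof -
  have "nat (int a mod int n) = a mod n" by (metis nat_int of_nat_mod)
  thus ?thesis unfolding rootpow_def using eta_pow_mod[of a] by (simp only:)
qed

lemma eta_nonzero: "\<eta> \<noteq> 0"
  using eta_pow_n n1 by (metis one_neq_zero power_0_left not_one_le_zero)

lemma eta_pow_inj:
  "a < n \<Longrightarrow> b < n \<Longrightarrow> \<eta> ^ a = \<eta> ^ b \<Longrightarrow> a = b"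
proof (rule ccontr)
  assume ab: "a < n" "b < n" "\<eta> ^ a = \<eta> ^ b" "a \<noteq> b"
  { fix a b :: nat assume "a < n" "b < n" "\<eta> ^ a = \<eta> ^ b" "a < b"
    have "\<eta> ^ b = \<eta> ^ a * \<eta> ^ (b - a)" using \<open>a<b\<close> by (simp flip: power_add)
    then have "\<eta> ^ a * \<eta> ^ (b - a) = \<eta> ^ a * 1"
      using \<open>\<eta> ^ a = \<eta> ^ b\<close> by (metis mult_1_right)
    hence "\<eta> ^ (b - a) = 1" using eta_nonzero by simp
    moreover have "0 < b - a" "b - a < n" using \<open>a<b\<close> \<open>b<n\<close> by auto
    ultimately have False using prim by (auto simp: primitive_root_def) }
  then show False using ab by (metis linorder_neqE_nat)
qed

lemma spec_add: "spec (x + y) j = spec x j + spec y j" by (simp add: dft_def)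
lemma spec_diff: "spec (x - y) j = spec x j - spec y j" by (simp add: dft_def)
lemma spec_smult: "spec (Polynomial.smult c x) j = c * spec x j" by (simp add: dft_def)
lemma spec_sum: "spec (sum f A) j = (\<Sum>i\<in>A. spec (f i) j)" by (simp add: dft_def poly_sum)
lemma spec_0: "spec 0 j = 0" by (simp add: dft_def)
lemma spec_cong: "a mod int n = b mod int n \<Longrightarrow> spec x a = spec x b"
  unfolding dft_def by (drule rootpow_cong) simp

lemma xn1_nonzero: "xn1 n \<noteq> (0::'b poly)"
proof -
  have "coeff (xn1 n :: 'b poly) n = 1" using n1 by (simp add: xn1_def)
  thus ?thesis by auto
qed

lemma degree_xn1: "degree (xn1 n :: 'b poly) = n"
proof (rule antisym)
  show "degree (xn1 n :: 'b poly) \<le> n" unfolding xn1_def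
    by (rule degree_diff_le) (auto simp: degree_monom_le)
  have "coeff (xn1 n :: 'b poly) n = 1" using n1 by (simp add: xn1_def)
  thus "n \<le> degree (xn1 n :: 'b poly)" by (intro le_degree) simp
qed

lemma degree_rmult: "degree (rmult n a (b::'b poly)) < n"
proof (cases "(a * b) mod xn1 n = 0")
  case True thus ?thesis using n1 by (simp add: rmult_def)
next
  case False
  thus ?thesis using degree_mod_less[OF xn1_nonzero, of "a*b"] degree_xn1 by (simp add: rmult_def)
qed

lemma rootpow_pow_n: "\<omega> j ^ n = 1"
proof -
  have "\<omega> j ^ n = \<omega> (j * int n)" by (rule rootpow_power)
  also have "\<dots> = \<omega> 0" by (rule rootpow_cong) simp
  also have "\<dots> = 1" by (simp add: rootpow_def)
  finally show ?thesis .
qed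

lemma spec_xn1: "spec (xn1 n) j = 0"
  by (simp add: dft_def xn1_def poly_monom rootpow_pow_n)

lemma spec_rmult: "spec (rmult n a b) j = spec a j * spec b j"
proof -
  have "(a * b) mod xn1 n = a * b - (a * b) div xn1 n * xn1 n" by (simp add: minus_div_mult_eq_mod)
  hence "spec (rmult n a b) j = spec (a * b) j - spec ((a * b) div xn1 n) j * spec (xn1 n) j"
    by (simp add: rmult_def dft_def)
  thus ?thesis using spec_xn1[of j] by (simp add: dft_def)
qed

lemma poly_eq_sum_lessThan:
  "degree (x::'b poly) < n \<Longrightarrow> poly x z = (\<Sum>i<n. coeff x i * z ^ i)"
proof -
  assume d: "degree x < n"
  have "poly x z = (\<Sum>i\<le>degree x. coeff x i * z ^ i)" by (rule poly_altdef)
  also have "\<dots> = (\<Sum>i<n. coeff x i * z ^ i)"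
    by (rule sum.mono_neutral_left) (use d in \<open>auto simp: coeff_eq_0\<close>)
  finally show ?thesis .
qed

lemma spec_tau_at_mult_q_power:
  assumes d: "degree (x::'b poly) < n"
  shows "spec (tau q n u v x) (j * int (q ^ u)) = spec x (j * v) ^ (q ^ u)"
proof -
  have "spec (tau q n u v x) (j * int (q ^ u))
      = (\<Sum>i<n. coeff x i ^ (q ^ u) * \<omega> (j * int (q ^ u)) ^ nat ((v * int i) mod int n))"
    by (simp add: dft_def tau_def poly_sum poly_monom)
  also have "\<dots> = (\<Sum>i<n. (coeff x i * \<omega> (j * v) ^ i) ^ (q ^ u))"
  proof (rule sum.cong[OF refl])
    fix i assume "i \<in> {..<n}"
    have "\<omega> (j * int (q ^ u)) ^ nat ((v * int i) mod int n)
        = \<omega> (j * int (q ^ u) * int (nat ((v * int i) mod int n)))" by (rule rootpow_power)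
    also have "\<dots> = \<omega> (j * v * int i * int (q ^ u))"
    proof (rule rootpow_cong)
      have nn: "int (nat ((v * int i) mod int n)) = (v * int i) mod int n" using n1 by simp
      show "j * int (q ^ u) * int (nat (v * int i mod int n)) mod int n =
            j * v * int i * int (q ^ u) mod int n"
        unfolding nn mod_mult_right_eq by (simp add: ac_simps)
    qed
    also have "\<dots> = (\<omega> (j * v) ^ i) ^ (q ^ u)" by (simp add: rootpow_power)
    finally show "coeff x i ^ (q ^ u) * \<omega> (j * int (q ^ u)) ^ nat ((v * int i) mod int n)
        = (coeff x i * \<omega> (j * v) ^ i) ^ (q ^ u)" by (simp add: power_mult_distrib)
  qed
  also have "\<dots> = (\<Sum>i<n. coeff x i * \<omega> (j * v) ^ i) ^ (q ^ u)" by (simp add: frobenius_sum)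
  also have "\<dots> = spec x (j * v) ^ (q ^ u)" by (simp add: dft_def poly_eq_sum_lessThan[OF d])
  finally show ?thesis .
qed

lemma ex_q_power_cong_1: "\<exists>P>0. (int q ^ P) mod int n = 1 mod int n"
proof -
  have "\<not> inj_on (\<lambda>i. q ^ i mod n) {..n}"
  proof
    assume "inj_on (\<lambda>i. q ^ i mod n) {..n}"
    hence "card ((\<lambda>i. q ^ i mod n) ` {..n}) = Suc n" by (simp add: card_image)
    moreover have "(\<lambda>i. q ^ i mod n) ` {..n} \<subseteq> {..<n}" using n1 by auto
    hence "card ((\<lambda>i. q ^ i mod n) ` {..n}) \<le> n" using card_mono[of "{..<n}"] by fastforce
    ultimately show False by simp
  qed
  then obtain i j where ij: "i \<le> n" "j \<le> n" "i \<noteq> j" "q ^ i mod n = q ^ j mod n"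
    unfolding inj_on_def by auto
  { fix i j :: nat assume ij: "i < j" "q ^ i mod n = q ^ j mod n"
    have "int (q ^ i) mod int n = int (q ^ j) mod int n" using arg_cong[OF ij(2), of int]
      by (simp only: of_nat_mod)
    hence "int n dvd int q ^ i - int q ^ j" by (simp add: mod_eq_dvd_iff)
    hence "int n dvd int q ^ j - int q ^ i" by (simp add: dvd_diff_commute)
    hence "int n dvd int q ^ i * (int q ^ (j - i) - 1)" using ij(1)
      by (simp add: algebra_simps flip: power_add)
    moreover have "coprime (int n) (int q ^ i)" using cop by simp
    ultimately have "int n dvd int q ^ (j - i) - 1" using coprime_dvd_mult_right_iff by blast
    hence "(int q ^ (j - i)) mod int n = 1 mod int n" by (simp add: mod_eq_dvd_iff)
    hence "\<exists>P>0. (int q ^ P) mod int n = 1 mod int n"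
      using ij(1) by (intro exI[of _ "j - i"]) simp }
  thus ?thesis using ij by (metis linorder_neqE_nat)
qed

definition q_period :: nat where
  "q_period = (SOME P. P > 0 \<and> (int q ^ P) mod int n = 1 mod int n)"

lemma q_period: "q_period > 0" "(int q ^ q_period) mod int n = 1 mod int n"
  using someI_ex[OF ex_q_power_cong_1] unfolding q_period_def by auto

definition q_inv :: nat where
  "q_inv = q ^ (q_period - 1)"

lemma q_mult_q_inv_cong: "(int q * int q_inv) mod int n = 1 mod int n"
proof -
  have "q * q_inv = q ^ q_period" using q_period(1) unfolding q_inv_def by (cases q_period) simp_all
  hence "int q * int q_inv = int q ^ q_period" by (metis of_nat_mult of_nat_power)
  thus ?thesis using q_period(2) by simp
qed

lemma mult_q_inv_power_cong: "(j * int q_inv ^ m * int q ^ m) mod int n = j mod int n"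
proof -
  have e: "(int q_inv ^ m * int q ^ m) = (int q * int q_inv) ^ m"
    by (simp add: power_mult_distrib mult.commute)
  have "(int q * int q_inv) ^ m mod int n = ((int q * int q_inv) mod int n) ^ m mod int n"
    by (rule power_mod[symmetric])
  also have "\<dots> = (1 mod int n) ^ m mod int n" by (simp only: q_mult_q_inv_cong)
  also have "\<dots> = 1 ^ m mod int n" by (rule power_mod)
  finally have "(int q_inv ^ m * int q ^ m) mod int n = 1 mod int n" unfolding e by simp
  hence "(j * ((int q_inv ^ m * int q ^ m) mod int n)) mod int n = (j * (1 mod int n)) mod int n"
    by simp
  thus ?thesis by (simp add: mod_mult_right_eq mult.assoc)
qed

lemma spec_tau:
  assumes d: "degree (x::'b poly) < n"
  shows "spec (tau q n u v x) k = spec x (k * int q_inv ^ u * v) ^ (q ^ u)"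
proof -
  have "spec (tau q n u v x) k = spec (tau q n u v x) (k * int q_inv ^ u * int (q ^ u))"
    by (rule spec_cong) (simp add: mult_q_inv_power_cong)
  also have "\<dots> = spec x (k * int q_inv ^ u * v) ^ (q ^ u)" by (rule spec_tau_at_mult_q_power[OF d])
  finally show ?thesis .
qed

lemma poly_eq_0_if_spec_eq_0:
  assumes d: "degree (x::'b poly) < n" and z: "\<And>j. spec x j = 0"
  shows "x = 0"
proof (rule ccontr)
  assume nz: "x \<noteq> 0"
  have sub: "(\<lambda>i. \<eta> ^ i) ` {..<n} \<subseteq> {z. poly x z = 0}"
  proof
    fix z assume "z \<in> (\<lambda>i. \<eta> ^ i) ` {..<n}"
    then obtain i where i: "i < n" "z = \<eta> ^ i" by auto
    have "spec x (int i) = 0" by (rule z)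
    thus "z \<in> {z. poly x z = 0}" using i by (simp add: dft_def rootpow_of_nat)
  qed
  have "inj_on (\<lambda>i. \<eta> ^ i) {..<n}" by (rule inj_onI) (auto intro: eta_pow_inj)
  hence "card ((\<lambda>i. \<eta> ^ i) ` {..<n}) = n" by (simp add: card_image)
  moreover have "card ((\<lambda>i. \<eta> ^ i) ` {..<n}) \<le> card {z. poly x z = 0}"
    by (rule card_mono[OF _ sub]) simp
  moreover have "card {z. poly x z = 0} \<le> degree x" by (rule card_poly_roots_bound[OF nz])
  ultimately show False using d by simp
qed

text \<open>The library's \<open>finite_field_power_card_eq_same\<close> needs the type class \<open>finite_field\<close>,
  which \<open>'b :: {field, finite}\<close> is not known to instantiate.\<close>

lemma power_q_power_N_eq_self: "(x::'b) ^ (q ^ N) = x"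
proof (cases "x = 0")
  case True thus ?thesis using q_pos by simp
next
  case False
  have cpos: "card (UNIV :: 'b set) > 0" using card q_pos by simp
  have "x * (\<Prod>y\<in>UNIV-{0}. x * y) = x * x ^ (card (UNIV :: 'b set) - 1) * \<Prod>(UNIV-{0})"
    by (simp add: prod.distrib mult_ac)
  also have "x * x ^ (card (UNIV :: 'b set) - 1) = x ^ card (UNIV :: 'b set)"
    using cpos by (simp flip: power_Suc)
  also have "(\<Prod>y\<in>UNIV-{0}. x * y) = (\<Prod>y\<in>UNIV-{0}. y)"
    by (rule prod.reindex_bij_witness[of _ "\<lambda>y. y / x" "\<lambda>y. x * y"]) (use False in auto)
  finally have "x * \<Prod>(UNIV-{0::'b}) = x ^ card (UNIV :: 'b set) * \<Prod>(UNIV-{0})" .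
  moreover have "\<Prod>(UNIV-{0::'b}) \<noteq> 0" by simp
  ultimately have "x = x ^ card (UNIV :: 'b set)" by simp
  thus ?thesis using card by simp
qed

lemma N_pos: "N > 0"
proof (rule ccontr)
  assume "\<not> N > 0"
  hence "card (UNIV :: 'b set) = 1" using card by simp
  moreover have "card {0::'b, 1} = 2" by simp
  moreover have "card {0::'b, 1} \<le> card (UNIV :: 'b set)" by (rule card_mono) auto
  ultimately show False by simp
qed

text \<open>The image of \<open>x \<mapsto> x\<^sup>q - x\<close> consists of roots of \<open>\<Sum>j<N. X^(q^j)\<close>: evaluated at
  \<open>x\<^sup>q - x\<close> this sum telescopes to \<open>x^(q^N) - x = 0\<close>.\<close>

lemma card_range_frobenius_minus_id_le: "card (range (\<lambda>x::'b. x ^ q - x)) \<le> q ^ (N - 1)"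
proof -
  define R :: "'b poly" where "R = (\<Sum>j<N. monom 1 (q ^ j))"
  have "poly R (x ^ q - x) = 0" for x
  proof -
    have "poly R (x ^ q - x) = (\<Sum>j<N. x ^ (q ^ Suc j) - x ^ (q ^ j))"
      by (simp add: R_def poly_sum poly_monom frobenius_diff power_mult[symmetric] mult.commute)
    also have "\<dots> = 0" by (subst sum_lessThan_telescope) (simp add: power_q_power_N_eq_self)
    finally show ?thesis .
  qed
  hence "card (range (\<lambda>x::'b. x ^ q - x)) \<le> card {y. poly R y = 0}" by (intro card_mono) auto
  moreover have "coeff R (q ^ (N - 1)) = 1"
  proof -
    have "coeff R (q ^ (N - 1)) = (\<Sum>j<N. if q ^ j = q ^ (N - 1) then 1 else 0)"
      by (simp add: R_def coeff_sum coeff_monom)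
    also have "\<dots> = (\<Sum>j\<in>{N - 1}. 1)"
      using q_ge_2 N_pos by (intro sum.mono_neutral_cong_right) auto
    finally show ?thesis by simp
  qed
  hence "R \<noteq> 0" by auto
  moreover have "degree R \<le> q ^ (N - 1)" unfolding R_def
  proof (rule degree_sum_le)
    fix j assume "j \<in> {..<N}"
    hence "q ^ j \<le> q ^ (N - 1)" using q_ge_2 by (intro power_increasing) auto
    thus "degree (monom (1::'b) (q ^ j)) \<le> q ^ (N - 1)" by (simp add: degree_monom_eq)
  qed simp
  ultimately show ?thesis using card_poly_roots_bound[of R] by linarith
qed

lemma card_Fq_ge: "card (Fq q :: 'b set) \<ge> q"
proof -
  have "q * q ^ (N - 1) = card (Fq q :: 'b set) * card (range (\<lambda>x::'b. x ^ q - x))"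
    using card_eq_card_kernel_mult_card_image[of UNIV "\<lambda>x::'b. x ^ q - x"] card N_pos
    by (simp add: frobenius1_add Fq_def flip: power_Suc)
  also have "\<dots> \<le> card (Fq q :: 'b set) * q ^ (N - 1)"
    using card_range_frobenius_minus_id_le by simp
  finally show ?thesis using q_pos by simp
qed

definition subfield :: "nat \<Rightarrow> 'b set" where "subfield d = {z. z ^ (q ^ d) = z}"

lemma card_subfield_le: "d \<ge> 1 \<Longrightarrow> card (subfield d) \<le> q ^ d"
proof -
  assume d1: "d \<ge> 1"
  define R :: "'b poly" where "R = monom 1 (q ^ d) - [:0, 1:]"
  have "q \<le> q ^ d" using d1 q_pos by (simp add: self_le_power)
  hence qd: "q ^ d \<ge> 2" using q_ge_2 by simp
  have c2: "coeff [:0, 1::'b:] (q ^ d) = 0"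
  proof -
    obtain k where "q ^ d = Suc (Suc k)" using qd by (metis add_2_eq_Suc le_Suc_ex)
    thus ?thesis by simp
  qed
  have cR: "coeff R (q ^ d) = 1" using c2 by (simp add: R_def)
  hence Rnz: "R \<noteq> 0" by auto
  have dR: "degree R \<le> q ^ d" unfolding R_def
    by (rule degree_diff_le) (use qd in \<open>auto simp: degree_monom_eq\<close>)
  have "subfield d \<subseteq> {y. poly R y = 0}" by (auto simp: subfield_def R_def poly_monom)
  hence "card (subfield d) \<le> card {y. poly R y = 0}" by (intro card_mono) auto
  also have "\<dots> \<le> q ^ d" using card_poly_roots_bound[OF Rnz] dR by simp
  finally show ?thesis .
qed

lemma subfield_divide:
  "z \<in> subfield d \<Longrightarrow> u \<in> subfield d \<Longrightarrow> z / u \<in> subfield d"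
  by (simp add: subfield_def power_divide)

section \<open>Cyclotomic cosets\<close>

definition in_coset :: "int \<Rightarrow> int \<Rightarrow> bool" where
  "in_coset l j \<longleftrightarrow> nat (j mod int n) \<in> cyc q n l"

lemma mem_cyc_iff: "x \<in> cyc q n l \<longleftrightarrow> (\<exists>i. int x = (l * int q ^ i) mod int n)"
proof
  assume "x \<in> cyc q n l"
  then obtain i where "x = nat ((l * int q ^ i) mod int n)" by (auto simp: cyc_def)
  moreover have "(l * int q ^ i) mod int n \<ge> 0" using n1 by simp
  ultimately show "\<exists>i. int x = (l * int q ^ i) mod int n" by auto
next
  assume "\<exists>i. int x = (l * int q ^ i) mod int n"
  then obtain i where "int x = (l * int q ^ i) mod int n" by auto
  hence "x = nat ((l * int q ^ i) mod int n)" by simp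
  thus "x \<in> cyc q n l" by (auto simp: cyc_def)
qed

lemma in_coset_iff:
  "in_coset l j \<longleftrightarrow> (\<exists>i. j mod int n = (l * int q ^ i) mod int n)"
proof -
  have "j mod int n \<ge> 0" using n1 by simp
  hence "int (nat (j mod int n)) = j mod int n" by simp
  thus ?thesis unfolding in_coset_def mem_cyc_iff by simp
qed

lemma in_coset_cong:
  "j mod int n = j' mod int n \<Longrightarrow> in_coset l j \<longleftrightarrow> in_coset l j'"
  by (simp add: in_coset_iff)

lemma in_coset_mult_q_power: "in_coset l (l * int q ^ i)"
  by (auto simp: in_coset_iff)

lemma in_coset_self: "in_coset l l"
  using in_coset_mult_q_power[of l 0] by simp

lemma in_coset_mult_q: "in_coset l j \<Longrightarrow> in_coset l (j * int q ^ m)"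
proof -
  assume "in_coset l j"
  then obtain i where i: "j mod int n = (l * int q ^ i) mod int n" by (auto simp: in_coset_iff)
  have "(j * int q ^ m) mod int n = ((j mod int n) * int q ^ m) mod int n" by (simp add: mod_mult_left_eq)
  also have "\<dots> = ((l * int q ^ i) mod int n * int q ^ m) mod int n" by (simp only: i)
  also have "\<dots> = (l * int q ^ (i + m)) mod int n" by (simp add: mod_mult_left_eq power_add mult.assoc)
  finally show ?thesis by (auto simp: in_coset_iff)
qed

lemma in_coset_mult_q_inv: "in_coset l j \<Longrightarrow> in_coset l (j * int q_inv ^ m)"
proof -
  assume "in_coset l j"
  hence "in_coset l (j * int q ^ ((q_period - 1) * m))" by (rule in_coset_mult_q)
  thus ?thesis by (simp add: q_inv_def power_mult)
qed

lemma in_coset_mult_q_cancel: "in_coset l (j * int q ^ m) \<Longrightarrow> in_coset l j"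
proof -
  assume "in_coset l (j * int q ^ m)"
  hence "in_coset l (j * int q ^ m * int q_inv ^ m)" by (rule in_coset_mult_q_inv)
  moreover have "(j * int q ^ m * int q_inv ^ m) mod int n = j mod int n"
    using mult_q_inv_power_cong[of j m] by (simp add: ac_simps)
  ultimately show ?thesis using in_coset_cong by blast
qed

lemma in_coset_mult_q_inv_cancel: "in_coset l (j * int q_inv ^ m) \<Longrightarrow> in_coset l j"
proof -
  assume "in_coset l (j * int q_inv ^ m)"
  hence "in_coset l (j * int q_inv ^ m * int q ^ m)" by (rule in_coset_mult_q)
  moreover have "(j * int q_inv ^ m * int q ^ m) mod int n = j mod int n" by (rule mult_q_inv_power_cong)
  ultimately show ?thesis using in_coset_cong by blast
qed

lemma in_coset_uminus: "in_coset l j \<longleftrightarrow> in_coset (- l) (- j)"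
proof -
  have "j mod int n = c mod int n \<longleftrightarrow> (- j) mod int n = (- c) mod int n" for c
    using mod_minus_cong[of j "int n" c] mod_minus_cong[of "- j" "int n" "- c"] by auto
  thus ?thesis by (simp add: in_coset_iff)
qed

lemma in_coset_trans: "in_coset b a \<Longrightarrow> in_coset a j \<Longrightarrow> in_coset b j"
proof -
  assume "in_coset b a" "in_coset a j"
  then obtain i k where i: "a mod int n = (b * int q ^ i) mod int n"
    and k: "j mod int n = (a * int q ^ k) mod int n" by (auto simp: in_coset_iff)
  have "j mod int n = ((a mod int n) * int q ^ k) mod int n" using k by (simp add: mod_mult_left_eq)
  also have "\<dots> = ((b * int q ^ i) mod int n * int q ^ k) mod int n" by (simp only: i)
  also have "\<dots> = (b * int q ^ (i + k)) mod int n" by (simp add: mod_mult_left_eq power_add mult.assoc)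
  finally show ?thesis by (auto simp: in_coset_iff)
qed

lemma in_coset_sym: "in_coset b a \<Longrightarrow> in_coset a b"
proof -
  assume "in_coset b a"
  then obtain i where i: "a mod int n = (b * int q ^ i) mod int n" by (auto simp: in_coset_iff)
  have "in_coset a (a * int q_inv ^ i)" using in_coset_self in_coset_mult_q_inv by blast
  moreover have "(a * int q_inv ^ i) mod int n = (b * int q ^ i * int q_inv ^ i) mod int n"
    using mod_mult_cong[OF i refl] .
  moreover have "(b * int q ^ i * int q_inv ^ i) mod int n = b mod int n"
    using mult_q_inv_power_cong[of b i] by (simp add: ac_simps)
  ultimately show ?thesis using in_coset_cong[of "a * int q_inv ^ i" b a] by simp
qed

lemma cyc_eq_if_in_coset: "in_coset b a \<Longrightarrow> cyc q n a = cyc q n b"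
proof -
  assume ba: "in_coset b a"
  have ab: "in_coset a b" using in_coset_sym[OF ba] .
  show ?thesis
  proof (intro set_eqI iffI)
    fix x assume "x \<in> cyc q n a"
    moreover have "x < n" using calculation n1 by (auto simp: cyc_def nat_less_iff)
    ultimately have "in_coset a (int x)" unfolding in_coset_def by simp
    hence "in_coset b (int x)" using in_coset_trans[OF ba] by blast
    thus "x \<in> cyc q n b" using \<open>x < n\<close> unfolding in_coset_def by simp
  next
    fix x assume "x \<in> cyc q n b"
    moreover have "x < n" using calculation n1 by (auto simp: cyc_def nat_less_iff)
    ultimately have "in_coset b (int x)" unfolding in_coset_def by simp
    hence "in_coset a (int x)" using in_coset_trans[OF ab] by blast
    thus "x \<in> cyc q n a" using \<open>x < n\<close> unfolding in_coset_def by simp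
  qed
qed

lemma in_coset_cyc_cong: "in_coset l j \<longleftrightarrow> in_coset l' j" if "cyc q n l = cyc q n l'"
  using that by (simp add: in_coset_def)

lemma cyc_subset_lessThan: "cyc q n l \<subseteq> {..<n}"
  using n1 by (auto simp: cyc_def nat_less_iff)

lemma finite_cyc: "finite (cyc q n l)"
  using cyc_subset_lessThan finite_subset by blast

definition coset_period :: "int \<Rightarrow> nat" where
  "coset_period l = (LEAST m. m > 0 \<and> (l * int q ^ m) mod int n = l mod int n)"

lemma ex_coset_period: "\<exists>m. m > 0 \<and> (l * int q ^ m) mod int n = l mod int n"
proof -
  have "(int q ^ q_period * l) mod int n = (1 * l) mod int n"
    using mod_mult_cong[OF q_period(2) refl] by simp
  thus ?thesis using q_period(1) by (intro exI[of _ q_period]) (simp add: mult.commute)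
qed

lemma coset_period: "coset_period l > 0" "(l * int q ^ coset_period l) mod int n = l mod int n"
  using LeastI_ex[OF ex_coset_period[of l]] unfolding coset_period_def by auto

lemma coset_period_least:
  "0 < m \<Longrightarrow> m < coset_period l
      \<Longrightarrow> (l * int q ^ m) mod int n \<noteq> l mod int n"
  using not_less_Least[of m "\<lambda>m. m > 0 \<and> (l * int q ^ m) mod int n = l mod int n"]
  unfolding coset_period_def by auto

lemma coset_period_reduce: "(l * int q ^ (coset_period l * a + r)) mod int n = (l * int q ^ r) mod int n"
proof (induction a)
  case 0 then show ?case by simp
next
  case (Suc a)
  have e: "l * int q ^ (coset_period l * Suc a + r)
      = (l * int q ^ coset_period l) * int q ^ (coset_period l * a + r)"
    by (simp add: power_add mult.assoc)
  have "((l * int q ^ coset_period l) * int q ^ (coset_period l * a + r)) mod int n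
      = (l * int q ^ (coset_period l * a + r)) mod int n"
    using mod_mult_cong[OF coset_period(2)[of l] refl, of "int q ^ (coset_period l * a + r)"] .
  thus ?case using Suc unfolding e by simp
qed

lemma coset_period_mod: "(l * int q ^ i) mod int n = (l * int q ^ (i mod coset_period l)) mod int n"
  using coset_period_reduce[of l "i div coset_period l" "i mod coset_period l"] by simp

lemma cyc_eq_image_period: "cyc q n l = (\<lambda>i. nat ((l * int q ^ i) mod int n)) ` {..<coset_period l}"
proof (intro set_eqI iffI)
  fix x assume "x \<in> cyc q n l"
  then obtain i where "x = nat ((l * int q ^ i) mod int n)" by (auto simp: cyc_def)
  hence "x = nat ((l * int q ^ (i mod coset_period l)) mod int n)" using coset_period_mod[of l i] by simp
  moreover have "i mod coset_period l < coset_period l" using coset_period(1) by simp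
  ultimately show "x \<in> (\<lambda>i. nat ((l * int q ^ i) mod int n)) ` {..<coset_period l}" by auto
qed (auto simp: cyc_def)

lemma inj_on_cyc_enum: "inj_on (\<lambda>i. nat ((l * int q ^ i) mod int n)) {..<coset_period l}"
proof -
  { fix i j assume ij: "i < j" "j < coset_period l" "(l * int q ^ i) mod int n = (l * int q ^ j) mod int n"
    have "(l * int q ^ i * int q_inv ^ i) mod int n = (l * int q ^ j * int q_inv ^ i) mod int n"
      using mod_mult_cong[OF ij(3) refl] .
    moreover have "(l * int q ^ i * int q_inv ^ i) mod int n = l mod int n"
      using mult_q_inv_power_cong[of l i] by (simp add: ac_simps)
    moreover have "l * int q ^ j * int q_inv ^ i = (l * int q ^ (j - i)) * int q_inv ^ i * int q ^ i"
    proof -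
      have "int q ^ j = int q ^ (j - i) * int q ^ i" using ij(1) by (simp flip: power_add)
      thus ?thesis by (simp add: ac_simps)
    qed
    moreover have "((l * int q ^ (j - i)) * int q_inv ^ i * int q ^ i) mod int n
        = (l * int q ^ (j - i)) mod int n"
      by (rule mult_q_inv_power_cong)
    ultimately have "(l * int q ^ (j - i)) mod int n = l mod int n" by simp
    moreover have "0 < j - i" "j - i < coset_period l" using ij by auto
    ultimately have False using coset_period_least by blast }
  note * = this
  show ?thesis
  proof (rule inj_onI)
    fix i j assume "i \<in> {..<coset_period l}" "j \<in> {..<coset_period l}"
      and e: "nat ((l * int q ^ i) mod int n) = nat ((l * int q ^ j) mod int n)"
    have "(l * int q ^ i) mod int n = (l * int q ^ j) mod int n"
      using e n1 by (simp add: eq_nat_nat_iff)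
    show "i = j"
    proof (cases i j rule: linorder_cases)
      case less thus ?thesis
        using * \<open>j \<in> _\<close> \<open>(l * int q ^ i) mod int n = _\<close> by auto
    next
      case greater thus ?thesis
        using * \<open>i \<in> _\<close> \<open>(l * int q ^ i) mod int n = _\<close> by fastforce
    qed simp
  qed
qed

lemma card_cyc_eq_period: "card (cyc q n l) = coset_period l"
  unfolding cyc_eq_image_period using inj_on_cyc_enum by (simp add: card_image)

lemma mult_q_power_card_cyc_cong: "(l * int q ^ card (cyc q n l)) mod int n = l mod int n"
  unfolding card_cyc_eq_period by (rule coset_period(2))

lemma coset_period_uminus: "coset_period (- l) = coset_period l"
proof -
  have "(- l * int q ^ m) mod int n = (- l) mod int n
      \<longleftrightarrow> (l * int q ^ m) mod int n = l mod int n" for m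
    using mod_minus_cong[of "l * int q ^ m" "int n" l] mod_minus_cong[of "- (l * int q ^ m)" "int n" "- l"]
    by auto
  thus ?thesis unfolding coset_period_def by simp
qed

lemma card_cyc_uminus: "card (cyc q n (- l)) = card (cyc q n l)"
  by (simp add: card_cyc_eq_period coset_period_uminus)

lemma mod_in_cyc: "nat (l mod int n) \<in> cyc q n l"
  unfolding cyc_def by (rule CollectI, rule exI[of _ 0]) simp

lemma card_cyc_le: "card (cyc q n l) \<le> n"
  using card_mono[OF _ cyc_subset_lessThan, of l] by simp

lemma card_cyc_pos: "card (cyc q n l) \<ge> 1"
  using mod_in_cyc[of l] finite_cyc[of l] by (metis One_nat_def Suc_leI card_gt_0_iff empty_iff)

lemma mu_props:
  assumes reps: "cyc_reps q n ls" and i: "i < length ls"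
  shows "mu q n ls i < length ls \<and> cyc q n (- int (ls ! i)) = cyc q n (int (ls ! (mu q n ls i)))"
proof -
  let ?P = "\<lambda>j. j < length ls \<and> cyc q n (- int (ls ! i)) = cyc q n (int (ls ! j))"
  have x0: "nat ((- int (ls ! i)) mod int n) < n" using n1 by (simp add: nat_less_iff)
  then obtain j where j: "j < length ls" "nat ((- int (ls ! i)) mod int n) \<in> cyc q n (int (ls ! j))"
    using reps unfolding cyc_reps_def by blast
  have "in_coset (int (ls ! j)) (- int (ls ! i))" using j(2) by (simp add: in_coset_def)
  hence Pj: "?P j" using j(1) cyc_eq_if_in_coset by blast
  have uniq: "\<And>j'. ?P j' \<Longrightarrow> j' = j"
  proof (rule ccontr)
    fix j' assume "?P j'" "j' \<noteq> j"
    hence "cyc q n (int (ls ! j')) = cyc q n (int (ls ! j))" using Pj by simp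
    thus False using reps \<open>?P j'\<close> j(1) \<open>j' \<noteq> j\<close>
      unfolding cyc_reps_def by blast
  qed
  have "mu q n ls i = j" unfolding mu_def using Pj uniq by (rule the_equality)
  thus ?thesis using Pj by simp
qed

section \<open>The ideals \<open>\<K>\<^sub>i\<close> and \<open>\<J>\<^sub>i\<close>\<close>

lemma root_factor_nonzero: "root_factor \<eta> k \<noteq> 0" by (simp add: root_factor_def)
lemma degree_root_factor: "degree (root_factor \<eta> k) = 1" by (simp add: root_factor_def)
lemma lead_coeff_root_factor: "lead_coeff (root_factor \<eta> k) = 1" by (simp add: root_factor_def)
lemma spec_root_factor: "spec (root_factor \<eta> k) j = \<omega> j - \<eta> ^ k"
  by (simp add: root_factor_def dft_def)

lemma spec_prod_root_factor:
  "spec (\<Prod>k\<in>A. root_factor \<eta> k) j = (\<Prod>k\<in>A. \<omega> j - \<eta> ^ k)"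
  by (simp add: dft_def poly_prod spec_root_factor[unfolded dft_def])

lemma degree_prod_root_factor:
  "finite A \<Longrightarrow> degree (\<Prod>k\<in>A. root_factor \<eta> k) = card A"
  by (simp add: degree_prod_eq_sum_degree root_factor_nonzero degree_root_factor)

lemma lead_coeff_prod_root_factor: "lead_coeff (\<Prod>k\<in>A. root_factor \<eta> k) = 1"
  by (simp add: lead_coeff_prod lead_coeff_root_factor)

lemma prod_root_factor_nonzero: "(\<Prod>k\<in>A. root_factor \<eta> k) \<noteq> 0"
  by (induct A rule: infinite_finite_induct) (simp_all add: root_factor_nonzero)

lemma degree_diff_less_if_coeff_eq:
  fixes a b :: "'b poly"
  assumes "degree a \<le> n" "degree b \<le> n" "coeff a n = coeff b n"
  shows "degree (a - b) < n"
proof (cases "a - b = 0")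
  case True thus ?thesis using n1 by simp
next
  case False
  have le: "degree (a - b) \<le> n" using assms by (simp add: degree_diff_le)
  have "coeff (a - b) n = 0" using assms by simp
  hence "degree (a - b) \<noteq> n" using False by (metis leading_coeff_0_iff)
  thus ?thesis using le by simp
qed

lemma xn1_eq_prod_root_factor: "xn1 n = (\<Prod>k\<in>{..<n}. root_factor \<eta> k)"
proof -
  let ?P = "\<Prod>k\<in>{..<n}. root_factor \<eta> k"
  have dP: "degree ?P = n" by (simp add: degree_prod_root_factor)
  have cP: "coeff ?P n = 1" using lead_coeff_prod_root_factor[of "{..<n}"] dP by simp
  have cX: "coeff (xn1 n :: 'b poly) n = 1" using n1 by (simp add: xn1_def)
  have d: "degree (xn1 n - ?P) < n"
    by (rule degree_diff_less_if_coeff_eq) (use dP cP cX degree_xn1 in auto)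
  have "xn1 n - ?P = 0"
  proof (rule poly_eq_0_if_spec_eq_0[OF d])
    fix j
    have k: "nat (j mod int n) \<in> {..<n}" using n1 by (simp add: nat_less_iff)
    have "spec ?P j = 0" unfolding spec_prod_root_factor
      by (rule prod_zero[OF _ bexI[OF _ k]]) (auto simp: rootpow_def)
    thus "spec (xn1 n - ?P) j = 0" by (simp add: spec_diff spec_xn1)
  qed
  thus ?thesis by simp
qed

definition cofactor :: "int \<Rightarrow> 'b poly" where
  "cofactor l = (\<Prod>k\<in>{..<n} - cyc q n l. root_factor \<eta> k)"

lemma degree_cofactor: "degree (cofactor l) = n - card (cyc q n l)"
  unfolding cofactor_def
    by (simp add: degree_prod_root_factor card_Diff_subset[OF finite_cyc cyc_subset_lessThan])

lemma cofactor_nonzero: "cofactor l \<noteq> 0" unfolding cofactor_def by (rule prod_root_factor_nonzero)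

lemma fpoly_eq_prod_root_factor:
  "fpoly q n \<eta> ls i = (\<Prod>k\<in>cyc q n (int (ls ! i)). root_factor \<eta> k)"
  by (simp add: fpoly_def root_factor_def)

lemma xn1_eq_cofactor_mult: "xn1 n = cofactor l * (\<Prod>k\<in>cyc q n l. root_factor \<eta> k)"
  unfolding xn1_eq_prod_root_factor cofactor_def by (rule prod.subset_diff[OF cyc_subset_lessThan]) simp

lemma xn1_div_fpoly: "xn1 n div fpoly q n \<eta> ls i = cofactor (int (ls ! i))"
  unfolding fpoly_eq_prod_root_factor xn1_eq_cofactor_mult[of "int (ls ! i)"]
  using prod_root_factor_nonzero by simp

lemma spec_cofactor_eq_0: "\<not> in_coset l j \<Longrightarrow> spec (cofactor l) j = 0"
proof -
  assume "\<not> in_coset l j"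
  hence k: "nat (j mod int n) \<in> {..<n} - cyc q n l" using n1 by (simp add: in_coset_def nat_less_iff)
  show ?thesis unfolding cofactor_def spec_prod_root_factor
    by (rule prod_zero[OF _ bexI[OF _ k]]) (auto simp: rootpow_def)
qed

lemma bij_betw_mult_q_coset_complement:
  "bij_betw (\<lambda>k. nat ((int k * int q) mod int n)) ({..<n} - cyc q n l) ({..<n} - cyc q n l)"
  (is "bij_betw ?\<sigma> ?D ?D")
proof (rule bij_betw_imageI)
  show inj: "inj_on ?\<sigma> ?D"
  proof (rule inj_onI)
    fix a b assume ab: "a \<in> ?D" "b \<in> ?D" "?\<sigma> a = ?\<sigma> b"
    have "(int a * int q) mod int n = (int b * int q) mod int n"
      using ab(3) n1 by (simp add: eq_nat_nat_iff)
    hence "(int a * int q * int q_inv ^ 1) mod int n = (int b * int q * int q_inv ^ 1) mod int n"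
      by (rule mod_mult_cong) simp
    hence "int a mod int n = int b mod int n"
      using mult_q_inv_power_cong[of "int a" 1] mult_q_inv_power_cong[of "int b" 1] by (simp add: ac_simps)
    thus "a = b" using ab(1,2) by simp
  qed
  have "?\<sigma> ` ?D \<subseteq> ?D"
  proof
    fix x assume "x \<in> ?\<sigma> ` ?D"
    then obtain k where k: "k \<in> ?D" "x = ?\<sigma> k" by auto
    have "x \<notin> cyc q n l"
    proof
      assume "x \<in> cyc q n l"
      hence "in_coset l (int k * int q ^ 1)" using k by (simp add: in_coset_def)
      hence "in_coset l (int k)" by (rule in_coset_mult_q_cancel)
      thus False using k(1) by (simp add: in_coset_def)
    qed
    thus "x \<in> ?D" using k n1 by (simp add: nat_less_iff)
  qed
  thus "?\<sigma> ` ?D = ?D" by (intro endo_inj_surj inj) simp_all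
qed

lemma spec_cofactor_mult_q: "spec (cofactor l) (j * int q) = spec (cofactor l) j ^ q"
proof -
  let ?\<sigma> = "\<lambda>k. nat ((int k * int q) mod int n)" and ?D = "{..<n} - cyc q n l"
  have "spec (cofactor l) j ^ q = (\<Prod>k\<in>?D. (\<omega> j - \<eta> ^ k) ^ q)"
    by (simp add: cofactor_def spec_prod_root_factor prod_power_distrib)
  also have "\<dots> = (\<Prod>k\<in>?D. \<omega> (j * int q) - \<eta> ^ ?\<sigma> k)"
  proof (rule prod.cong[OF refl])
    fix k
    have "(\<eta> ^ k) ^ q = \<eta> ^ ?\<sigma> k"
      unfolding power_mult[symmetric] by (rule eta_pow_cong) (use n1 in simp)
    thus "(\<omega> j - \<eta> ^ k) ^ q = \<omega> (j * int q) - \<eta> ^ ?\<sigma> k"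
      by (simp add: frobenius1_diff rootpow_power)
  qed
  also have "\<dots> = (\<Prod>k\<in>?D. \<omega> (j * int q) - \<eta> ^ k)"
    using prod.reindex_bij_betw[OF bij_betw_mult_q_coset_complement,
        of "\<lambda>k. \<omega> (j * int q) - \<eta> ^ k"] by simp
  also have "\<dots> = spec (cofactor l) (j * int q)" by (simp add: cofactor_def spec_prod_root_factor)
  finally show ?thesis by simp
qed

text \<open>The spectral shape of the elements of \<open>\<J>\<^sub>i\<close> (\<open>m = t\<close>) and of \<open>\<K>\<^sub>i\<close> (\<open>m = 1\<close>)
  for \<open>l = l\<^sub>i\<close>: the spectrum is supported on the coset of \<open>l\<close> and commutes with the
  \<open>q\<^sup>m\<close>-power Frobenius.\<close>

definition in_component :: "nat \<Rightarrow> int \<Rightarrow> 'b poly \<Rightarrow> bool" where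
  "in_component m l x \<longleftrightarrow> degree x < n
      \<and> (\<forall>j. \<not> in_coset l j \<longrightarrow> spec x j = 0) \<and>
      (\<forall>j. spec x (j * int q ^ m) = spec x j ^ (q ^ m))"

lemma spec_mult_q_power:
  assumes "\<And>j. spec x (j * int q) = spec x j ^ q"
  shows "spec x (j * int q ^ m) = spec x j ^ (q ^ m)"
proof (induction m arbitrary: j)
  case 0 show ?case by simp
next
  case (Suc m)
  have "spec x (j * int q ^ Suc m) = spec x ((j * int q ^ m) * int q)" by (simp add: ac_simps)
  also have "\<dots> = spec x (j * int q ^ m) ^ q" by (rule assms)
  also have "\<dots> = (spec x j ^ (q ^ m)) ^ q" using Suc by simp
  also have "\<dots> = spec x j ^ (q ^ Suc m)" by (simp add: power_mult[symmetric] mult.commute)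
  finally show ?case .
qed

lemma in_component_1_imp: "in_component 1 l x \<Longrightarrow> in_component m l x"
  unfolding in_component_def using spec_mult_q_power[of x] by simp

lemma spec_mult_q_power_if_Rn:
  "c \<in> Rn (q ^ m) n \<Longrightarrow> spec c (j * int q ^ m) = spec c j ^ (q ^ m)"
proof -
  assume c: "c \<in> Rn (q ^ m) n"
  have d: "degree c < n" and co: "\<And>i. coeff c i ^ (q ^ m) = coeff c i"
    using c by (auto simp: Rn_def Fq_def)
  have "spec c (j * int q ^ m) = (\<Sum>i<n. coeff c i * \<omega> (j * int q ^ m) ^ i)"
    by (simp add: dft_def poly_eq_sum_lessThan[OF d])
  also have "\<dots> = (\<Sum>i<n. (coeff c i * \<omega> j ^ i) ^ (q ^ m))"
  proof (rule sum.cong[OF refl])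
    fix i
    have "\<omega> (j * int q ^ m) = \<omega> j ^ (q ^ m)" by (simp add: rootpow_power)
    thus "coeff c i * \<omega> (j * int q ^ m) ^ i = (coeff c i * \<omega> j ^ i) ^ (q ^ m)"
      by (simp add: power_mult_distrib co flip: power_mult) (simp add: mult.commute)
  qed
  also have "\<dots> = spec c j ^ (q ^ m)" by (simp add: frobenius_sum dft_def poly_eq_sum_lessThan[OF d])
  finally show ?thesis .
qed

lemma in_component_rmult_cofactor:
  assumes c: "c \<in> Rn (q ^ m) n"
  shows "in_component m l (rmult n c (cofactor l))"
  unfolding in_component_def
proof (intro conjI allI impI)
  show "degree (rmult n c (cofactor l)) < n" by (rule degree_rmult)
next
  fix j assume "\<not> in_coset l j"
  thus "spec (rmult n c (cofactor l)) j = 0" by (simp add: spec_rmult spec_cofactor_eq_0)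
next
  fix j
  have "spec (cofactor l) (j * int q ^ m) = spec (cofactor l) j ^ (q ^ m)"
    using spec_mult_q_power spec_cofactor_mult_q by blast
  thus "spec (rmult n c (cofactor l)) (j * int q ^ m) = spec (rmult n c (cofactor l)) j ^ (q ^ m)"
    by (simp add: spec_rmult spec_mult_q_power_if_Rn[OF c] power_mult_distrib)
qed

lemma in_component_if_Jid: "x \<in> Jid q t n \<eta> ls i \<Longrightarrow> in_component t (int (ls ! i)) x"
  unfolding Jid_def xn1_div_fpoly using in_component_rmult_cofactor by auto

lemma in_component_if_Kid: "x \<in> Kid q n \<eta> ls i \<Longrightarrow> in_component 1 (int (ls ! i)) x"
  unfolding Kid_def xn1_div_fpoly using in_component_rmult_cofactor[of _ 1] by auto

lemma in_component_diff:
  "in_component m l x \<Longrightarrow> in_component m l y \<Longrightarrow> in_component m l (x - y)"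
  unfolding in_component_def by (auto simp: degree_diff_less spec_diff frobenius_diff)

lemma eq_0_if_spec_vanishes_at_rep:
  assumes d: "degree x < n" and off: "\<And>j. \<not> in_coset l j \<Longrightarrow> spec x j = 0"
    and fr: "\<And>j. spec x (j * int q) = spec x j ^ q" and z: "spec x l = 0"
  shows "x = 0"
proof (rule poly_eq_0_if_spec_eq_0[OF d])
  fix j show "spec x j = 0"
  proof (cases "in_coset l j")
    case True
    then obtain i where i: "j mod int n = (l * int q ^ i) mod int n" by (auto simp: in_coset_iff)
    have "spec x j = spec x (l * int q ^ i)" by (rule spec_cong[OF i])
    also have "\<dots> = spec x l ^ (q ^ i)" by (rule spec_mult_q_power[OF fr])
    also have "\<dots> = 0" using z q_pos by simp
    finally show ?thesis .
  qed (rule off)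
qed

lemma in_component_1_eq_0: "in_component 1 l x \<Longrightarrow> spec x l = 0 \<Longrightarrow> x = 0"
  unfolding in_component_def by (rule eq_0_if_spec_vanishes_at_rep) auto

lemma in_component_1_eq_0_at:
  assumes g: "in_component 1 l x" and k: "in_coset l k" and z: "spec x k = 0"
  shows "x = 0"
proof -
  obtain i where i: "k mod int n = (l * int q ^ i) mod int n" using k by (auto simp: in_coset_iff)
  have "spec x k = spec x (l * int q ^ i)" by (rule spec_cong[OF i])
  also have "\<dots> = spec x l ^ (q ^ i)"
    using in_component_1_imp[OF g, of i] unfolding in_component_def by simp
  finally have "spec x l = 0" using z by simp
  thus ?thesis by (rule in_component_1_eq_0[OF g])
qed

lemma spec_in_subfield:
  assumes "in_component 1 l x"
  shows "spec x l \<in> subfield (card (cyc q n l))"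
proof -
  have "spec x l ^ (q ^ card (cyc q n l)) = spec x (l * int q ^ card (cyc q n l))"
    using assms in_component_1_imp unfolding in_component_def by metis
  also have "\<dots> = spec x l" by (rule spec_cong[OF mult_q_power_card_cyc_cong])
  finally show ?thesis by (simp add: subfield_def)
qed

lemma in_component_cyc_cong:
  "cyc q n l = cyc q n l' \<Longrightarrow> in_component m l x \<longleftrightarrow> in_component m l' x"
proof -
  assume c: "cyc q n l = cyc q n l'"
  have e: "in_coset l = in_coset l'" by (rule ext) (rule in_coset_cyc_cong[OF c])
  show ?thesis unfolding in_component_def e ..
qed

lemma Kid_eq_cofactor: "Kid q n \<eta> ls i = {rmult n c (cofactor (int (ls ! i))) | c. c \<in> Rn q n}"
  unfolding Kid_def xn1_div_fpoly ..

lemma Kid_diff_closed: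
  "x \<in> Kid q n \<eta> ls i \<Longrightarrow> y \<in> Kid q n \<eta> ls i
      \<Longrightarrow> x - y \<in> Kid q n \<eta> ls i"
proof -
  assume "x \<in> Kid q n \<eta> ls i" "y \<in> Kid q n \<eta> ls i"
  then obtain c c' where c: "c \<in> Rn q n" "x = rmult n c (cofactor (int (ls ! i)))"
    and c': "c' \<in> Rn q n" "y = rmult n c' (cofactor (int (ls ! i)))" by (auto simp: Kid_eq_cofactor)
  have "x - y = rmult n (c - c') (cofactor (int (ls ! i)))" unfolding c(2) c'(2) rmult_diff_left ..
  moreover have "c - c' \<in> Rn q n"
    using c(1) c'(1) unfolding Rn_def Fq_def by (auto simp: degree_diff_less frobenius1_diff)
  ultimately show ?thesis by (auto simp: Kid_eq_cofactor)
qed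

lemma in_component_if_Kid_coset:
  assumes "in_coset (int (ls ! i)) l" and "x \<in> Kid q n \<eta> ls i"
  shows "in_component 1 l x"
  using in_component_if_Kid[OF assms(2)] in_component_cyc_cong[OF cyc_eq_if_in_coset[OF assms(1)]]
  by blast

lemma inj_on_spec_Kid:
  assumes l: "in_coset (int (ls ! i)) l"
  shows "inj_on (\<lambda>x. spec x l) (Kid q n \<eta> ls i)"
proof (rule inj_onI)
  fix x y assume xy: "x \<in> Kid q n \<eta> ls i" "y \<in> Kid q n \<eta> ls i" "spec x l = spec y l"
  have "in_component 1 l (x - y)"
    using in_component_if_Kid_coset[OF l] xy by (simp add: in_component_diff)
  moreover have "spec (x - y) l = 0" using xy(3) by (simp add: spec_diff)
  ultimately show "x = y" using in_component_1_eq_0 by fastforce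
qed

lemma spec_Kid_subset_subfield:
  assumes l: "in_coset (int (ls ! i)) l"
  shows "(\<lambda>x. spec x l) ` Kid q n \<eta> ls i \<subseteq> subfield (dd q n ls i)"
  using spec_in_subfield in_component_if_Kid_coset[OF l] cyc_eq_if_in_coset[OF l]
  by (fastforce simp: dd_def)

lemma finite_Kid: "finite (Kid q n \<eta> ls i)"
  by (rule inj_on_finite[OF inj_on_spec_Kid[OF in_coset_self] spec_Kid_subset_subfield[OF in_coset_self]])
    simp

lemma rmult_cofactor_eq_mult:
  assumes "degree c < card (cyc q n l)"
  shows "rmult n c (cofactor l) = c * cofactor l"
proof -
  have "degree (c * cofactor l) < n"
    using assms card_cyc_le[of l] n1 degree_mult_le[of c "cofactor l"] by (simp add: degree_cofactor)
  thus ?thesis unfolding rmult_def by (simp add: mod_poly_less degree_xn1)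
qed

lemma card_Kid_ge: "q ^ dd q n ls i \<le> card (Kid q n \<eta> ls i)"
proof -
  define l where "l = int (ls ! i)"
  define d where "d = dd q n ls i"
  define D where "D = PiE {..<d} (\<lambda>_. Fq q :: 'b set)"
  define cf :: "(nat \<Rightarrow> 'b) \<Rightarrow> 'b poly"
    where "cf f = (\<Sum>k<d. monom (f k) k)" for f
  have d: "d = card (cyc q n l)" "1 \<le> d" "d \<le> n"
    using card_cyc_pos[of l] card_cyc_le[of l] by (simp_all add: d_def l_def dd_def)
  have coeff_cf: "coeff (cf f) k = (if k < d then f k else 0)" for f k
    by (simp add: cf_def coeff_sum)
  have degree_cf: "degree (cf f) < d" for f
    by (rule degree_lessI) (use d(2) in \<open>auto simp: coeff_cf\<close>)
  have cf_Rn: "cf f \<in> Rn q n" if "f \<in> D" for f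
    unfolding Rn_def
  proof (intro CollectI conjI allI)
    show "degree (cf f) < n" using degree_cf[of f] d(3) by linarith
    show "coeff (cf f) k \<in> Fq q" for k
      using that q_pos by (auto simp: coeff_cf D_def Fq_def)
  qed
  have "(\<lambda>f. cf f * cofactor l) ` D \<subseteq> Kid q n \<eta> ls i"
  proof (rule image_subsetI)
    fix f assume "f \<in> D"
    hence "rmult n (cf f) (cofactor l) \<in> Kid q n \<eta> ls i"
      using cf_Rn unfolding Kid_eq_cofactor l_def by blast
    thus "cf f * cofactor l \<in> Kid q n \<eta> ls i"
      using rmult_cofactor_eq_mult[of "cf f" l] degree_cf[of f] d(1) by simp
  qed
  moreover have "inj_on (\<lambda>f. cf f * cofactor l) D"
  proof (rule inj_onI)
    fix f g assume fg: "f \<in> D" "g \<in> D" and "cf f * cofactor l = cf g * cofactor l"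
    hence "cf f = cf g" using cofactor_nonzero by simp
    hence "f k = g k" if "k < d" for k using coeff_cf[of f k] coeff_cf[of g k] that by simp
    thus "f = g" using fg unfolding D_def by (intro PiE_ext) auto
  qed
  ultimately have "card D \<le> card (Kid q n \<eta> ls i)"
    by (intro card_inj_on_le finite_Kid)
  moreover have "q ^ d \<le> card D"
    unfolding D_def card_PiE[OF finite_lessThan] using card_Fq_ge by (simp add: power_mono)
  ultimately show ?thesis by (simp add: d_def)
qed

lemma card_Kid: "card (Kid q n \<eta> ls i) = q ^ dd q n ls i"
  and card_subfield_dd: "card (subfield (dd q n ls i)) = q ^ dd q n ls i"
proof -
  let ?K = "Kid q n \<eta> ls i" and ?l = "int (ls ! i)"
  have "card ?K \<le> card (subfield (dd q n ls i))"
    by (rule card_inj_on_le[OF inj_on_spec_Kid[OF in_coset_self]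
          spec_Kid_subset_subfield[OF in_coset_self]]) simp
  moreover have "card (subfield (dd q n ls i)) \<le> q ^ dd q n ls i"
    using card_subfield_le[OF card_cyc_pos] by (simp add: dd_def)
  ultimately show "card ?K = q ^ dd q n ls i" "card (subfield (dd q n ls i)) = q ^ dd q n ls i"
    using card_Kid_ge[of ls i] by linarith+
qed

lemma spec_image_Kid:
  assumes l: "in_coset (int (ls ! i)) l"
  shows "(\<lambda>x. spec x l) ` Kid q n \<eta> ls i = subfield (dd q n ls i)"
proof (rule card_subset_eq)
  show "card ((\<lambda>x. spec x l) ` Kid q n \<eta> ls i) = card (subfield (dd q n ls i))"
    using inj_on_spec_Kid[OF l] by (simp add: card_image card_Kid card_subfield_dd)
  show "finite (subfield (dd q n ls i))"
    by (rule card_ge_0_finite) (simp add: card_subfield_dd q_pos)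
qed (rule spec_Kid_subset_subfield[OF l])

lemma card_subspace:
  assumes "ksubspace n (Kid q n \<eta> ls i) (Jid q t n \<eta> ls i) A"
    and "kdim n (Kid q n \<eta> ls i) A r"
  shows "card A = q ^ (dd q n ls i * r)"
  using card_eq_power_if_kdim[OF finite_Kid Kid_diff_closed assms] by (simp add: card_Kid power_mult)

section \<open>Spectra of the forms\<close>

text \<open>\<open>orbit x k u\<close> is the value at \<open>k\<close> of the spectrum of \<open>\<tau>_(q^u,1) x\<close>
  (see \<open>spec_tau_1\<close>); the spectra of all the forms are expressed through these sequences.\<close>

definition orbit :: "'b poly \<Rightarrow> int \<Rightarrow> nat \<Rightarrow> 'b" where
  "orbit x k u = spec x (k * int q_inv ^ u) ^ (q ^ u)"

lemma spec_tau_1: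
  "degree (x::'b poly) < n \<Longrightarrow> spec (tau q n u 1 x) k = spec x (k * int q_inv ^ u) ^ (q ^ u)"
  using spec_tau[of x u 1 k] by simp

lemma spec_tau_minus_1:
  "degree (x::'b poly) < n
      \<Longrightarrow> spec (tau q n u (-1) x) k = spec x (- (k * int q_inv ^ u)) ^ (q ^ u)"
  using spec_tau[of x u "-1" k] by simp

lemma degree_tau: "degree (tau q n u v (x::'b poly)) < n"
proof -
  have "degree (tau q n u v x) \<le> n - 1" unfolding tau_def
  proof (rule degree_sum_le)
    fix i assume "i \<in> {..<n}"
    have "nat ((v * int i) mod int n) < n" using n1 by (simp add: nat_less_iff)
    thus "degree (monom (coeff x i ^ q ^ u) (nat ((v * int i) mod int n))) \<le> n - 1"
      using degree_monom_le[of "coeff x i ^ q ^ u" "nat ((v * int i) mod int n)"] by linarith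
  qed simp
  thus ?thesis using n1 by linarith
qed

lemma degree_sum_tau: "degree (\<Sum>u<m. tau q n u v (f u :: 'b poly)) < n"
proof -
  have "degree (\<Sum>u<m. tau q n u v (f u :: 'b poly)) \<le> n - 1"
  proof (rule degree_sum_le)
    fix u show "degree (tau q n u v (f u)) \<le> n - 1" using degree_tau[of u v "f u"] by linarith
  qed simp
  thus ?thesis using n1 by linarith
qed

lemma spec_trace:
  "spec (\<Sum>u<t. tau q n u 1 (rmult n A B)) k
      = (\<Sum>u<t. (spec A (k * int q_inv ^ u) * spec B (k * int q_inv ^ u)) ^ (q ^ u))"
  by (simp add: spec_sum spec_tau_1[OF degree_rmult] spec_rmult)

lemma spec_form0:
  "degree b < n \<Longrightarrow> spec (form0 q t n a b) k = (\<Sum>u<t. orbit a k u * orbit b (- k) u)"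
  unfolding form0_def spec_trace
  by (simp add: spec_tau_minus_1 orbit_def power_mult_distrib)

lemma power_q_power_q_power: "(x ^ (q ^ w)) ^ (q ^ u) = (x::'b) ^ (q ^ (u + w))"
  by (simp add: power_mult[symmetric] power_add mult.commute)

lemma spec_formstar:
  "degree b < n \<Longrightarrow> spec (formstar q t n a b) k
      = (\<Sum>u<t. orbit a k u * (\<Sum>w\<in>{1..<t}. orbit b (- k) (u + w)))"
proof -
  assume d: "degree b < n"
  have "spec (formstar q t n a b) k
      = (\<Sum>u<t. (spec a (k * int q_inv ^ u) *
        (\<Sum>w\<in>{1..<t}. spec b (- (k * int q_inv ^ u * int q_inv ^ w)) ^ (q ^ w))) ^ (q ^ u))"
    unfolding formstar_def spec_trace by (simp add: spec_sum spec_tau_minus_1[OF d])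
  also have "\<dots> = (\<Sum>u<t. orbit a k u * (\<Sum>w\<in>{1..<t}. orbit b (- k) (u + w)))"
  proof (rule sum.cong[OF refl])
    fix u
    have "(\<Sum>w\<in>{1..<t}. spec b (- (k * int q_inv ^ u * int q_inv ^ w)) ^ (q ^ w)) ^ (q ^ u)
        = (\<Sum>w\<in>{1..<t}. (spec b (- (k * int q_inv ^ u * int q_inv ^ w)) ^ (q ^ w)) ^ (q ^ u))"
      by (rule frobenius_sum)
    also have "\<dots> = (\<Sum>w\<in>{1..<t}. orbit b (- k) (u + w))"
      by (rule sum.cong[OF refl]) (simp add: orbit_def power_q_power_q_power power_add mult.assoc)
    finally show "(spec a (k * int q_inv ^ u) *
        (\<Sum>w\<in>{1..<t}. spec b (- (k * int q_inv ^ u * int q_inv ^ w)) ^ (q ^ w))) ^ (q ^ u)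
        = orbit a k u * (\<Sum>w\<in>{1..<t}. orbit b (- k) (u + w))"
      by (simp add: orbit_def power_mult_distrib)
  qed
  finally show ?thesis .
qed

lemma spec_formgamma:
  "degree b < n \<Longrightarrow> spec (formgamma q t n \<gamma> a b) k
      = (\<Sum>u<t. \<gamma> ^ (q ^ u) * orbit a k u * orbit b (- k) (u + t div 2))"
proof -
  assume d: "degree b < n"
  show ?thesis unfolding formgamma_def spec_trace
  proof (rule sum.cong[OF refl])
    fix u
    have "spec (tau q n (t div 2) (- 1) b) (k * int q_inv ^ u) ^ (q ^ u) = orbit b (- k) (u + t div 2)"
      by (simp add: spec_tau_minus_1[OF d] orbit_def power_q_power_q_power power_add mult.assoc)
    thus "(spec (Polynomial.smult \<gamma> a) (k * int q_inv ^ u) * spec (tau q n (t div 2) (- 1) b)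
        (k * int q_inv ^ u)) ^ (q ^ u)
        = \<gamma> ^ (q ^ u) * orbit a k u * orbit b (- k) (u + t div 2)"
      by (simp add: spec_smult orbit_def power_mult_distrib)
  qed
qed

text \<open>The form \<open>[\<cdot>,\<cdot>]\<^sub>\<delta>\<close> without the factor \<open>\<chi>\<close> of the Hermitian case.\<close>

definition plain_form :: "delta \<Rightarrow> 'b \<Rightarrow> 'b poly \<Rightarrow> 'b poly \<Rightarrow> 'b poly" where
  "plain_form \<delta> \<gamma> a b
      = (case \<delta> of DStar \<Rightarrow> formstar q t n a b | DZero \<Rightarrow> form0 q t n a b
     | DGammaH \<Rightarrow> formgamma q t n \<gamma> a b)"

definition orbit_form :: "delta \<Rightarrow> 'b \<Rightarrow> (nat \<Rightarrow> 'b) \<Rightarrow> (nat \<Rightarrow> 'b) \<Rightarrow> 'b" where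
  "orbit_form \<delta> \<gamma> f g = (case \<delta> of
       DStar \<Rightarrow> (\<Sum>u<t. f u) * (\<Sum>u<t. g u) - (\<Sum>u<t. f u * g u)
     | DZero \<Rightarrow> (\<Sum>u<t. f u * g u)
     | DGammaH \<Rightarrow> (\<Sum>u<t. \<gamma> ^ (q ^ u) * f u * g (u + t div 2)))"

definition gamma_condition :: "delta \<Rightarrow> 'b \<Rightarrow> bool" where
  "gamma_condition \<delta> \<gamma> \<longleftrightarrow>
  (\<delta> = DGammaH \<longrightarrow> \<gamma> ^ (q ^ t) = \<gamma> \<and> \<gamma> ^ (q ^ (t div 2)) = - \<gamma> \<and> even t)"

definition form_sign :: "delta \<Rightarrow> 'b" where
  "form_sign \<delta> = (if \<delta> = DGammaH then - 1 else 1)"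

definition t_periodic :: "(nat \<Rightarrow> 'b) \<Rightarrow> bool" where
  "t_periodic f \<longleftrightarrow> (\<forall>u. f (u + t) = f u)"

lemma sum_shift_t_periodic:
  "t_periodic h \<Longrightarrow> (\<Sum>u<t. h (u + m)) = (\<Sum>u<t. h u)"
  unfolding t_periodic_def by (rule sum_lessThan_shift_periodic) blast

lemma sum_shift1_t_periodic:
  "t_periodic h \<Longrightarrow> (\<Sum>u<t. h (Suc u)) = (\<Sum>u<t. h u)"
  using sum_shift_t_periodic[of h 1] by simp

definition frobenius_t_equivariant :: "'b poly \<Rightarrow> bool" where
  "frobenius_t_equivariant x \<longleftrightarrow> (\<forall>j. spec x (j * int q ^ t) = spec x j ^ (q ^ t))"

lemma frobenius_t_equivariant_if_in_component:
  "in_component t l x \<Longrightarrow> frobenius_t_equivariant x"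
  unfolding in_component_def frobenius_t_equivariant_def by blast

lemma degree_less_if_in_component: "in_component m l x \<Longrightarrow> degree x < n"
  unfolding in_component_def by blast

lemma frobenius_t_equivariant_add:
  "frobenius_t_equivariant x \<Longrightarrow> frobenius_t_equivariant y
      \<Longrightarrow> frobenius_t_equivariant (x + y)"
  unfolding frobenius_t_equivariant_def by (simp add: spec_add frobenius_add)

lemma frobenius_t_equivariant_rmult:
  "in_component 1 l c \<Longrightarrow> frobenius_t_equivariant y
      \<Longrightarrow> frobenius_t_equivariant (rmult n c y)"
proof -
  assume c: "in_component 1 l c" and y: "frobenius_t_equivariant y"
  have "in_component t l c" using c by (rule in_component_1_imp)
  thus ?thesis using y unfolding frobenius_t_equivariant_def in_component_def
    by (simp add: spec_rmult power_mult_distrib)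
qed

lemma t_periodic_orbit: "frobenius_t_equivariant x \<Longrightarrow> t_periodic (orbit x k)"
  unfolding t_periodic_def
proof
  fix u assume f: "frobenius_t_equivariant x"
  have "orbit x k (u + t) = (spec x (k * int q_inv ^ (u + t)) ^ (q ^ t)) ^ (q ^ u)"
    by (simp add: orbit_def power_q_power_q_power add.commute)
  also have "spec x (k * int q_inv ^ (u + t)) ^ (q ^ t) = spec x (k * int q_inv ^ (u + t) * int q ^ t)"
    using f unfolding frobenius_t_equivariant_def by simp
  also have "\<dots> = spec x (k * int q_inv ^ u)"
    by (rule spec_cong) (use mult_q_inv_power_cong[of "k * int q_inv ^ u" t] in \<open>simp add: power_add
      mult.assoc\<close>)
  finally show "orbit x k (u + t) = orbit x k u" by (simp add: orbit_def)
qed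

lemma orbit_eq_0_off_coset:
  "in_component t l x \<Longrightarrow> \<not> in_coset l k \<Longrightarrow> orbit x k u = 0"
proof -
  assume g: "in_component t l x" and k: "\<not> in_coset l k"
  have "\<not> in_coset l (k * int q_inv ^ u)" using k in_coset_mult_q_inv_cancel by blast
  thus ?thesis using g q_pos unfolding in_component_def orbit_def by simp
qed

lemma spec_plain_form:
  assumes d: "degree b < n" and fb: "frobenius_t_equivariant b"
  shows "spec (plain_form \<delta> \<gamma> a b) k
      = orbit_form \<delta> \<gamma> (orbit a k) (orbit b (- k))"
proof (cases \<delta>)
  case DZero thus ?thesis by (simp add: plain_form_def orbit_form_def spec_form0[OF d])
next
  case DGammaH thus ?thesis by (simp add: plain_form_def orbit_form_def spec_formgamma[OF d])
next
  case DStar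
  have p: "t_periodic (orbit b (- k))" by (rule t_periodic_orbit[OF fb])
  have "\<And>u. (\<Sum>w\<in>{1..<t}. orbit b (- k) (u + w))
      = (\<Sum>w<t. orbit b (- k) w) - orbit b (- k) u"
  proof -
    fix u
    have "{..<t} = insert 0 {1..<t}" using t2 by auto
    hence "(\<Sum>w<t. orbit b (- k) (w + u))
        = orbit b (- k) u + (\<Sum>w\<in>{1..<t}. orbit b (- k) (w + u))" by simp
    moreover have "(\<Sum>w<t. orbit b (- k) (w + u)) = (\<Sum>w<t. orbit b (- k) w)"
      by (rule sum_shift_t_periodic[OF p])
    ultimately show "(\<Sum>w\<in>{1..<t}. orbit b (- k) (u + w))
        = (\<Sum>w<t. orbit b (- k) w) - orbit b (- k) u"
      by (simp add: add.commute)
  qed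
  hence "spec (plain_form \<delta> \<gamma> a b) k
      = (\<Sum>u<t. orbit a k u * ((\<Sum>w<t. orbit b (- k) w) - orbit b (- k) u))"
    using DStar by (simp add: plain_form_def spec_formstar[OF d])
  also have "\<dots> = (\<Sum>u<t. orbit a k u * (\<Sum>w<t. orbit b (- k) w))
      - (\<Sum>u<t. orbit a k u * orbit b (- k) u)"
    by (simp add: right_diff_distrib sum_subtractf)
  also have "\<dots> = orbit_form \<delta> \<gamma> (orbit a k) (orbit b (- k))"
    using DStar by (simp add: orbit_form_def sum_distrib_right)
  finally show ?thesis .
qed

lemma orbit_add: "orbit (x + y) k = (\<lambda>u. orbit x k u + orbit y k u)"
  by (auto simp: orbit_def spec_add frobenius_add)

lemma orbit_mult_q_Suc: "orbit x (k * int q) (Suc u) = orbit x k u ^ q"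
proof -
  have "spec x (k * int q * int q_inv ^ Suc u) = spec x (k * int q_inv ^ u)"
    by (rule spec_cong) (use mult_q_inv_power_cong[of "k * int q_inv ^ u" 1] in \<open>simp add:
      ac_simps\<close>)
  have p: "\<And>y::'b. y ^ (q ^ Suc u) = (y ^ (q ^ u)) ^ q"
    by (simp add: power_mult[symmetric] mult.commute)
  show ?thesis unfolding orbit_def \<open>spec x _ = _\<close> p ..
qed

lemma orbit_form_add_left:
  "orbit_form \<delta> \<gamma> (\<lambda>u. f1 u + f2 u) g
      = orbit_form \<delta> \<gamma> f1 g + orbit_form \<delta> \<gamma> f2 g"
  by (cases \<delta>) (simp_all add: orbit_form_def algebra_simps sum.distrib)

lemma orbit_form_add_right:
  "orbit_form \<delta> \<gamma> f (\<lambda>u. g1 u + g2 u)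
      = orbit_form \<delta> \<gamma> f g1 + orbit_form \<delta> \<gamma> f g2"
  by (cases \<delta>) (simp_all add: orbit_form_def algebra_simps sum.distrib)

lemma orbit_form_scale_right:
  "orbit_form \<delta> \<gamma> f (\<lambda>u. z * g u) = z * orbit_form \<delta> \<gamma> f g"
  by (cases \<delta>) (simp_all add: orbit_form_def algebra_simps sum_distrib_left)

lemma orbit_form_zero_left: "(\<And>u. f u = 0) \<Longrightarrow> orbit_form \<delta> \<gamma> f g = 0"
  by (cases \<delta>) (simp_all add: orbit_form_def)

lemma orbit_form_zero_right: "(\<And>u. g u = 0) \<Longrightarrow> orbit_form \<delta> \<gamma> f g = 0"
  by (cases \<delta>) (simp_all add: orbit_form_def)

lemma sum_t_periodic_frobenius:
  assumes "t_periodic h'" and "\<And>u. h' (Suc u) = h u ^ q"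
  shows "(\<Sum>u<t. h' u) = (\<Sum>u<t. h u) ^ q"
  using sum_shift1_t_periodic[OF assms(1)] assms(2) frobenius_sum[of h "{..<t}" 1] by simp

lemma orbit_form_frobenius:
  assumes gc: "gamma_condition \<delta> \<gamma>" and pf': "t_periodic f'" and pg': "t_periodic g'"
    and sf: "\<And>u. f' (Suc u) = f u ^ q" and sg: "\<And>u. g' (Suc u) = g u ^ q"
  shows "orbit_form \<delta> \<gamma> f' g' = orbit_form \<delta> \<gamma> f g ^ q"
proof -
  have "(\<Sum>u<t. f' u) = (\<Sum>u<t. f u) ^ q" "(\<Sum>u<t. g' u) = (\<Sum>u<t. g u) ^ q"
    "(\<Sum>u<t. f' u * g' u) = (\<Sum>u<t. f u * g u) ^ q"
    using pf' pg' sf sg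
    by (auto intro!: sum_t_periodic_frobenius simp: t_periodic_def power_mult_distrib)
  moreover have "(\<Sum>u<t. \<gamma> ^ (q ^ u) * f' u * g' (u + t div 2))
      = (\<Sum>u<t. \<gamma> ^ (q ^ u) * f u * g (u + t div 2)) ^ q" if \<delta>: "\<delta> = DGammaH"
  proof (rule sum_t_periodic_frobenius)
    have "\<gamma> ^ (q ^ (u + t)) = \<gamma> ^ (q ^ u)" for u
      using gc \<delta> by (simp add: gamma_condition_def power_add power_mult mult.commute)
    moreover have "g' (u + t + t div 2) = g' (u + t div 2)" for u
      using pg' unfolding t_periodic_def by (metis add.commute add.left_commute)
    ultimately show "t_periodic (\<lambda>u. \<gamma> ^ (q ^ u) * f' u * g' (u + t div 2))"
      using pf' by (simp add: t_periodic_def)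
    show "\<gamma> ^ (q ^ Suc u) * f' (Suc u) * g' (Suc u + t div 2)
        = (\<gamma> ^ (q ^ u) * f u * g (u + t div 2)) ^ q"
      for u using sf sg[of "u + t div 2"]
        by (simp add: power_mult_distrib power_mult[symmetric] mult.commute)
  qed
  ultimately show ?thesis
    by (cases \<delta>) (simp_all add: orbit_form_def frobenius1_diff power_mult_distrib)
qed

lemma orbit_form_swap:
  assumes gc: "gamma_condition \<delta> \<gamma>" and pf: "t_periodic f" and pg: "t_periodic g"
  shows "orbit_form \<delta> \<gamma> g f = form_sign \<delta> * orbit_form \<delta> \<gamma> f g"
proof (cases \<delta>)
  case DZero thus ?thesis by (simp add: orbit_form_def form_sign_def mult.commute)
next
  case DStar thus ?thesis by (simp add: orbit_form_def form_sign_def mult.commute)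
next
  case DGammaH
  have gt: "\<gamma> ^ (q ^ t) = \<gamma>" and gs: "\<gamma> ^ (q ^ (t div 2)) = - \<gamma>"
    and t_even: "even t"
    using gc DGammaH by (auto simp: gamma_condition_def)
  define s where "s = t div 2"
  have ts: "t = s + s" using t_even unfolding s_def by presburger
  let ?h = "\<lambda>u. \<gamma> ^ (q ^ u) * g u * f (u + s)"
  have ph: "t_periodic ?h"
    unfolding t_periodic_def
  proof
    fix u
    have "\<gamma> ^ (q ^ (u + t)) = \<gamma> ^ (q ^ u)"
      using gt by (simp add: power_add power_mult mult.commute)
    moreover have "g (u + t) = g u" using pg unfolding t_periodic_def by blast
    moreover have "f ((u + s) + t) = f (u + s)" using pf unfolding t_periodic_def by blast
    hence "f (u + t + s) = f (u + s)" by (simp add: ac_simps)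
    ultimately show "?h (u + t) = ?h u" by simp
  qed
  have "(\<Sum>u<t. ?h u) = (\<Sum>u<t. ?h (u + s))" by (rule sum_shift_t_periodic[OF ph, symmetric])
  also have "\<dots> = (\<Sum>u<t. - (\<gamma> ^ (q ^ u) * f u * g (u + s)))"
  proof (rule sum.cong[OF refl])
    fix u
    have "\<gamma> ^ (q ^ (u + s)) = (\<gamma> ^ (q ^ s)) ^ (q ^ u)"
      by (simp add: power_add power_mult[symmetric] mult.commute)
    also have "\<dots> = - (\<gamma> ^ (q ^ u))" using gs frobenius_uminus by (simp add: s_def)
    finally have g1: "\<gamma> ^ (q ^ (u + s)) = - (\<gamma> ^ (q ^ u))" .
    have "f (u + s + s) = f u" using pf ts unfolding t_periodic_def by (metis add.assoc)
    thus "?h (u + s) = - (\<gamma> ^ (q ^ u) * f u * g (u + s))" using g1 by (simp add: ac_simps)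
  qed
  finally show ?thesis using DGammaH by (simp add: orbit_form_def form_sign_def s_def sum_negf)
qed

lemma power_q_power_mult_if_fixed:
  fixes x :: 'b
  assumes "x ^ (q ^ a) = x" shows "x ^ (q ^ (a * j)) = x"
proof (induction j)
  case (Suc j)
  have "x ^ (q ^ (a * Suc j)) = (x ^ (q ^ (a * j))) ^ (q ^ a)"
    by (simp add: power_add power_mult[symmetric] mult.commute)
  thus ?case using Suc assms by simp
qed simp

lemma power_q_power_mult_if_negated:
  fixes x :: 'b
  assumes "x ^ (q ^ a) = - x" shows "x ^ (q ^ (a * j)) = (if even j then x else - x)"
proof (induction j)
  case (Suc j)
  have "x ^ (q ^ (a * Suc j)) = (x ^ (q ^ (a * j))) ^ (q ^ a)"
    by (simp add: power_add power_mult[symmetric] mult.commute)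
  thus ?case using Suc assms frobenius_uminus[of x a] by simp
qed simp

text \<open>With \<open>t = 2\<^sup>e m\<close> and \<open>m\<close> odd, the hypotheses on \<open>\<gamma>\<close> concern \<open>q^(2^e)\<close> and
  \<open>q^(2^(e-1))\<close>; iterating them \<open>m\<close> times gives the conditions for \<open>q\<^sup>t\<close> and
  \<open>q^(t/2)\<close>.\<close>

lemma gamma_condition_if_Tdelta:
  assumes "Tdelta \<delta> p t"
    and "\<delta> = DGammaH \<longrightarrow> \<gamma> \<in> Fq (q ^ (2 ^ multiplicity 2 t))
           \<and> \<gamma> + \<gamma> ^ (q ^ (2 ^ (multiplicity 2 t - 1))) = 0"
  shows "gamma_condition \<delta> \<gamma>"
  unfolding gamma_condition_def
proof
  assume \<delta>: "\<delta> = DGammaH"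
  define e where "e = multiplicity 2 t"
  have "even t" using assms(1) \<delta> by (simp add: Tdelta_def)
  hence "e > 0" using t2 by (simp add: e_def multiplicity_gt_zero_iff)
  obtain m where m: "t = 2 ^ e * m" "odd m"
    using multiplicity_decompose'[of t 2] t2 by (auto simp: e_def)
  have half: "t div 2 = 2 ^ (e - 1) * m" using m(1) \<open>e > 0\<close> by (cases e) simp_all
  have "\<gamma> ^ (q ^ (2 ^ e)) = \<gamma>" "\<gamma> ^ (q ^ (2 ^ (e - 1))) = - \<gamma>"
    using assms(2) \<delta> by (auto simp: Fq_def e_def eq_neg_iff_add_eq_0 add.commute)
  thus "\<gamma> ^ (q ^ t) = \<gamma> \<and> \<gamma> ^ (q ^ (t div 2)) = - \<gamma> \<and> even t"
    using power_q_power_mult_if_fixed power_q_power_mult_if_negated[of \<gamma> "2 ^ (e - 1)" m]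
      m half \<open>even t\<close> by simp
qed


end

section \<open>Isotropic elements of \<open>\<J>\<^sub>h \<oplus> \<J>_\<mu>(h)\<close>\<close>

locale coset_pair = cyclotomic_setting p q kk n t N \<eta>
  for p q kk n t N :: nat and \<eta> :: "'b::{field,finite}" +
  fixes ls :: "nat list" and h :: nat and \<delta> :: delta and \<gamma> :: "'b::{field,finite}"
  assumes reps: "cyc_reps q n ls" and hlt: "h < length ls" and muh: "mu q n ls h \<noteq> h"
    and gc: "gamma_condition \<delta> \<gamma>"
begin

abbreviation "lh \<equiv> int (ls ! h)"
abbreviation "mh \<equiv> mu q n ls h"
abbreviation "B \<equiv> plain_form \<delta> \<gamma>"

abbreviation "dh \<equiv> dd q n ls h"

lemma mu_h: "mh < length ls" "cyc q n (- lh) = cyc q n (int (ls ! mh))"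
  using mu_props[OF reps hlt] by auto

lemma dd_mh: "dd q n ls mh = dh"
  using mu_h(2) card_cyc_uminus[of lh] by (simp add: dd_def)

lemma coset_disjoint_uminus: "in_coset lh j \<Longrightarrow> \<not> in_coset (- lh) j"
proof
  assume a: "in_coset lh j" "in_coset (- lh) j"
  have "cyc q n j = cyc q n lh" using cyc_eq_if_in_coset[OF a(1)] .
  moreover have "cyc q n j = cyc q n (- lh)" using cyc_eq_if_in_coset[OF a(2)] .
  ultimately have "cyc q n (int (ls ! h)) = cyc q n (int (ls ! mh))" using mu_h by simp
  thus False using reps hlt mu_h(1) muh unfolding cyc_reps_def by blast
qed

lemma degree_B: "degree (B x y) < n"
  by (cases \<delta>) (simp_all add: plain_form_def form0_def formstar_def formgamma_def degree_sum_tau)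

lemma B_eq_0_same_support:
  assumes gx: "in_component t l x" and gy: "in_component t l y"
    and sep: "\<And>k. in_coset l k \<Longrightarrow> \<not> in_coset l (- k)"
  shows "B x y = 0"
proof (rule poly_eq_0_if_spec_eq_0[OF degree_B])
  fix k
  have fy: "frobenius_t_equivariant y" using gy by (rule frobenius_t_equivariant_if_in_component)
  have dy: "degree y < n" using gy by (simp add: in_component_def)
  show "spec (B x y) k = 0" unfolding spec_plain_form[OF dy fy]
  proof (cases "in_coset l k")
    case True
    hence "\<And>u. orbit y (- k) u = 0" using orbit_eq_0_off_coset[OF gy] sep by blast
    thus "orbit_form \<delta> \<gamma> (orbit x k) (orbit y (- k)) = 0" by (rule orbit_form_zero_right)
  next
    case False
    hence "\<And>u. orbit x k u = 0" using orbit_eq_0_off_coset[OF gx] by blast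
    thus "orbit_form \<delta> \<gamma> (orbit x k) (orbit y (- k)) = 0" by (rule orbit_form_zero_left)
  qed
qed

lemma B_eq_0_on_h: "in_component t lh a \<Longrightarrow> in_component t lh a' \<Longrightarrow> B a a' = 0"
  by (rule B_eq_0_same_support) (use coset_disjoint_uminus in_coset_uminus in auto)

lemma B_eq_0_on_mh:
  "in_component t (- lh) b \<Longrightarrow> in_component t (- lh) b' \<Longrightarrow> B b b' = 0"
proof (rule B_eq_0_same_support)
  fix k assume "in_coset (- lh) k"
  hence "in_coset lh (- k)" using in_coset_uminus[of "- lh" k] by simp
  thus "\<not> in_coset (- lh) (- k)" by (rule coset_disjoint_uminus)
qed

lemma spec_B_off_coset:
  "in_component t l x \<Longrightarrow> degree y < n \<Longrightarrow> frobenius_t_equivariant y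
      \<Longrightarrow> \<not> in_coset l k \<Longrightarrow> spec (B x y) k = 0"
  using orbit_eq_0_off_coset spec_plain_form orbit_form_zero_left by metis

lemma spec_B_mult_q:
  assumes fx: "frobenius_t_equivariant x" and dy: "degree y < n" and fy: "frobenius_t_equivariant y"
  shows "spec (B x y) (k * int q) = spec (B x y) k ^ q"
  unfolding spec_plain_form[OF dy fy]
  by (rule orbit_form_frobenius[OF gc t_periodic_orbit[OF fx] t_periodic_orbit[OF fy]
        orbit_mult_q_Suc orbit_mult_q_Suc[of y "- k", simplified]])

lemma spec_B_swap:
  assumes dx: "degree x < n" and fx: "frobenius_t_equivariant x" and dy: "degree y < n"
    and fy: "frobenius_t_equivariant y"
  shows "spec (B y x) (- k) = form_sign \<delta> * spec (B x y) k"
proof -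
  have "spec (B y x) (- k) = orbit_form \<delta> \<gamma> (orbit y (- k)) (orbit x k)"
    using spec_plain_form[OF dx fx, where a = y and k = "- k"] by simp
  also have "\<dots> = form_sign \<delta> * orbit_form \<delta> \<gamma> (orbit x k) (orbit y (- k))"
    by (rule orbit_form_swap[OF gc t_periodic_orbit[OF fx] t_periodic_orbit[OF fy]])
  also have "\<dots> = form_sign \<delta> * spec (B x y) k" by (simp add: spec_plain_form[OF dy fy])
  finally show ?thesis .
qed

lemma spec_B_add_right:
  assumes d1: "degree y1 < n" "frobenius_t_equivariant y1"
    and d2: "degree y2 < n" "frobenius_t_equivariant y2"
  shows "spec (B x (y1 + y2)) k = spec (B x y1) k + spec (B x y2) k"
proof -
  have "spec (B x (y1 + y2)) k = orbit_form \<delta> \<gamma> (orbit x k) (orbit (y1 + y2) (- k))"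
    by (rule spec_plain_form)
      (use d1 d2 frobenius_t_equivariant_add in \<open>auto intro: degree_add_less\<close>)
  also have "\<dots> = orbit_form \<delta> \<gamma> (orbit x k)
      (\<lambda>u. orbit y1 (- k) u + orbit y2 (- k) u)" by (simp only: orbit_add)
  also have "\<dots> = spec (B x y1) k + spec (B x y2) k"
    by (simp add: orbit_form_add_right spec_plain_form[OF d1] spec_plain_form[OF d2])
  finally show ?thesis .
qed

lemma spec_B_add_left:
  assumes d: "degree y < n" "frobenius_t_equivariant y"
  shows "spec (B (x1 + x2) y) k = spec (B x1 y) k + spec (B x2 y) k"
  by (simp add: spec_plain_form[OF d] orbit_add orbit_form_add_left)

lemma spec_B_scale_right:
  assumes c: "in_component 1 l c" and dy: "degree y < n" and fy: "frobenius_t_equivariant y"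
  shows "spec (B x (rmult n c y)) k = spec c (- k) * spec (B x y) k"
proof -
  have "spec (B x (rmult n c y)) k = orbit_form \<delta> \<gamma> (orbit x k) (orbit (rmult n c y) (- k))"
    by (rule spec_plain_form[OF degree_rmult frobenius_t_equivariant_rmult[OF c fy]])
  also have "orbit (rmult n c y) (- k) = (\<lambda>u. spec c (- k) * orbit y (- k) u)"
  proof
    fix u
    have "spec c (- (k * int q_inv ^ u)) ^ (q ^ u) = spec c (- (k * int q_inv ^ u) * int q ^ u)"
      using in_component_1_imp[OF c, of u] unfolding in_component_def by (metis (no_types))
    also have "\<dots> = spec c (- k)"
      by (rule spec_cong) (use mult_q_inv_power_cong[of "- k" u] in \<open>simp add: ac_simps\<close>)
    finally show "orbit (rmult n c y) (- k) u = spec c (- k) * orbit y (- k) u"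
      by (simp add: orbit_def spec_rmult power_mult_distrib)
  qed
  also have "orbit_form \<delta> \<gamma> (orbit x k) (\<lambda>u. spec c (- k) * orbit y (- k) u)
      = spec c (- k) * spec (B x y) k"
    by (simp add: orbit_form_scale_right spec_plain_form[OF dy fy])
  finally show ?thesis .
qed

lemma spec_B_in_subfield:
  assumes fa: "frobenius_t_equivariant a" and db: "degree b < n" and fb: "frobenius_t_equivariant b"
  shows "spec (B a b) lh \<in> subfield dh"
proof -
  have "spec (B a b) (lh * int q ^ m) = spec (B a b) lh ^ (q ^ m)" for m
    by (rule spec_mult_q_power) (rule spec_B_mult_q[OF fa db fb])
  hence "spec (B a b) lh ^ (q ^ card (cyc q n lh)) = spec (B a b) (lh * int q ^ card (cyc q n lh))" by simp
  also have "\<dots> = spec (B a b) lh" by (rule spec_cong[OF mult_q_power_card_cyc_cong])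
  finally show ?thesis by (simp add: subfield_def dd_def)
qed

lemma B_eq_0_iff_spec_lh:
  assumes ga: "in_component t lh a" and db: "degree b < n" and fb: "frobenius_t_equivariant b"
  shows "B a b = 0 \<longleftrightarrow> spec (B a b) lh = 0"
proof
  assume "spec (B a b) lh = 0"
  show "B a b = 0"
  proof (rule eq_0_if_spec_vanishes_at_rep[OF degree_B])
    show "\<And>j. \<not> in_coset lh j \<Longrightarrow> spec (B a b) j = 0"
      using spec_B_off_coset[OF ga db fb] .
    show "\<And>j. spec (B a b) (j * int q) = spec (B a b) j ^ q"
      using spec_B_mult_q[OF frobenius_t_equivariant_if_in_component[OF ga] db fb] .
  qed fact
qed (simp add: spec_0)

lemma B_swap_eq_0:
  assumes ga: "in_component t lh a" and gb: "in_component t (- lh) b" and z: "B a b = 0"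
  shows "B b a = 0"
proof -
  have da: "degree a < n" and fa: "frobenius_t_equivariant a"
    using degree_less_if_in_component[OF ga] frobenius_t_equivariant_if_in_component[OF ga] by auto
  have db: "degree b < n" and fb: "frobenius_t_equivariant b"
    using degree_less_if_in_component[OF gb] frobenius_t_equivariant_if_in_component[OF gb] by auto
  show ?thesis
  proof (rule eq_0_if_spec_vanishes_at_rep[OF degree_B])
    show "\<And>j. \<not> in_coset (- lh) j \<Longrightarrow> spec (B b a) j = 0"
      using spec_B_off_coset[OF gb da fa] .
    show "\<And>j. spec (B b a) (j * int q) = spec (B b a) j ^ q" using spec_B_mult_q[OF fb da fa] .
    show "spec (B b a) (- lh) = 0" using spec_B_swap[OF da fa db fb, of lh] z by (simp add: spec_0)
  qed
qed

lemma spec_B_self_sum: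
  assumes ga: "in_component t lh a" and gb: "in_component t (- lh) b"
  shows "spec (B (a + b) (a + b)) k = spec (B a b) k + spec (B b a) k"
proof -
  have da: "degree a < n" and fa: "frobenius_t_equivariant a"
    using degree_less_if_in_component[OF ga] frobenius_t_equivariant_if_in_component[OF ga] by auto
  have db: "degree b < n" and fb: "frobenius_t_equivariant b"
    using degree_less_if_in_component[OF gb] frobenius_t_equivariant_if_in_component[OF gb] by auto
  have dab: "degree (a + b) < n" using da db by (simp add: degree_add_less)
  have fab: "frobenius_t_equivariant (a + b)" using fa fb by (rule frobenius_t_equivariant_add)
  have "spec (B (a + b) (a + b)) k = spec (B a (a + b)) k + spec (B b (a + b)) k"
    by (rule spec_B_add_left[OF dab fab])
  also have "\<dots> = (spec (B a a) k + spec (B a b) k) + (spec (B b a) k + spec (B b b) k)"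
    by (simp add: spec_B_add_right[OF da fa db fb])
  also have "\<dots> = spec (B a b) k + spec (B b a) k"
    using B_eq_0_on_h[OF ga ga] B_eq_0_on_mh[OF gb gb] by (simp add: spec_0)
  finally show ?thesis .
qed

lemma B_self_eq_0_iff:
  assumes ga: "in_component t lh a" and gb: "in_component t (- lh) b"
  shows "B (a + b) (a + b) = 0 \<longleftrightarrow> B a b = 0"
proof -
  have da: "degree a < n" and fa: "frobenius_t_equivariant a"
    using degree_less_if_in_component[OF ga] frobenius_t_equivariant_if_in_component[OF ga] by auto
  have db: "degree b < n" and fb: "frobenius_t_equivariant b"
    using degree_less_if_in_component[OF gb] frobenius_t_equivariant_if_in_component[OF gb] by auto
  show ?thesis
  proof
    assume z: "B (a + b) (a + b) = 0"
    show "B a b = 0"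
    proof (rule poly_eq_0_if_spec_eq_0[OF degree_B])
      fix k
      have s: "spec (B a b) k + spec (B b a) k = 0"
        using spec_B_self_sum[OF ga gb, of k] z by (simp add: spec_0)
      show "spec (B a b) k = 0"
      proof (cases "in_coset lh k")
        case True
        hence "spec (B b a) k = 0" using spec_B_off_coset[OF gb da fa] coset_disjoint_uminus by blast
        thus ?thesis using s by simp
      next
        case False thus ?thesis using spec_B_off_coset[OF ga db fb] by blast
      qed
    qed
  next
    assume z: "B a b = 0"
    have z2: "B b a = 0" by (rule B_swap_eq_0[OF ga gb z])
    show "B (a + b) (a + b) = 0"
      by (rule poly_eq_0_if_spec_eq_0[OF degree_B]) (simp add: spec_B_self_sum[OF ga gb] z z2 spec_0)
  qed
qed

definition theta_condition :: "'b poly \<Rightarrow> bool" where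
  "theta_condition \<theta> \<longleftrightarrow> (\<delta> = DGammaH \<longrightarrow> in_component 1 lh \<theta> \<and> \<theta> \<noteq> 0)"

lemma bform_eq_B:
  "\<delta> \<noteq> DGammaH \<Longrightarrow> bform \<delta> q t n \<gamma> \<theta> x y = B x y"
  by (cases \<delta>) (simp_all add: bform_def plain_form_def)

lemma bform_eq_chi_B:
  "\<delta> = DGammaH \<Longrightarrow> bform \<delta> q t n \<gamma> \<theta> x y
      = rmult n (\<theta> - tau q n 0 (-1) \<theta>) (B x y)"
  by (simp add: bform_def plain_form_def formH_def)

lemma rmult_0_right: "rmult n c 0 = 0" by (simp add: rmult_def)

lemma spec_chi_nonzero:
  assumes g: "in_component 1 lh \<theta>" and nz: "\<theta> \<noteq> 0"
    and k: "in_coset lh k \<or> in_coset (- lh) k"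
  shows "spec (\<theta> - tau q n 0 (-1) \<theta>) k \<noteq> 0"
proof -
  have d: "degree \<theta> < n" using g by (simp add: in_component_def)
  have e: "spec (\<theta> - tau q n 0 (-1) \<theta>) k = spec \<theta> k - spec \<theta> (- k)"
    by (simp add: spec_diff spec_tau_minus_1[OF d])
  show ?thesis
  proof (cases "in_coset lh k")
    case True
    have "\<not> in_coset lh (- k)" using coset_disjoint_uminus True in_coset_uminus by blast
    hence "spec \<theta> (- k) = 0" using g by (simp add: in_component_def)
    moreover have "spec \<theta> k \<noteq> 0" using in_component_1_eq_0_at[OF g True] nz by blast
    ultimately show ?thesis using e by simp
  next
    case False
    hence k2: "in_coset (- lh) k" using k by simp
    have "spec \<theta> k = 0" using g False by (simp add: in_component_def)
    moreover have "in_coset lh (- k)" using k2 in_coset_uminus[of lh "- k"] by simp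
    hence "spec \<theta> (- k) \<noteq> 0" using in_component_1_eq_0_at[OF g] nz by blast
    ultimately show ?thesis using e by simp
  qed
qed

lemma chi_B_self_eq_0_iff:
  assumes \<theta>: "in_component 1 lh \<theta>" "\<theta> \<noteq> 0"
    and ga: "in_component t lh a" and gb: "in_component t (- lh) b"
  shows "rmult n (\<theta> - tau q n 0 (-1) \<theta>) (B (a + b) (a + b)) = 0
      \<longleftrightarrow> B (a + b) (a + b) = 0"
proof
  assume z: "rmult n (\<theta> - tau q n 0 (-1) \<theta>) (B (a + b) (a + b)) = 0"
  show "B (a + b) (a + b) = 0"
  proof (rule poly_eq_0_if_spec_eq_0[OF degree_B])
    fix k
    have p: "spec (\<theta> - tau q n 0 (-1) \<theta>) k * spec (B (a + b) (a + b)) k = 0"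
      using z by (simp add: spec_rmult[symmetric] spec_0)
    show "spec (B (a + b) (a + b)) k = 0"
    proof (cases "in_coset lh k \<or> in_coset (- lh) k")
      case True thus ?thesis using p spec_chi_nonzero[OF \<theta>] by simp
    next
      case False
      have "spec (B a b) k = 0"
        using False spec_B_off_coset[OF ga degree_less_if_in_component[OF gb]
            frobenius_t_equivariant_if_in_component[OF gb]] by blast
      moreover have "spec (B b a) k = 0"
        using False spec_B_off_coset[OF gb degree_less_if_in_component[OF ga]
            frobenius_t_equivariant_if_in_component[OF ga]] by blast
      ultimately show ?thesis by (simp add: spec_B_self_sum[OF ga gb])
    qed
  qed
qed (simp add: rmult_0_right)

lemma isotropic_iff_spec_B:
  assumes ga: "in_component t lh a" and gb: "in_component t (- lh) b"
    and \<theta>: "theta_condition \<theta>"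
  shows "bform \<delta> q t n \<gamma> \<theta> (a + b) (a + b) = 0
      \<longleftrightarrow> spec (B a b) lh = 0"
proof -
  have "bform \<delta> q t n \<gamma> \<theta> (a + b) (a + b) = 0
      \<longleftrightarrow> B (a + b) (a + b) = 0"
  proof (cases "\<delta> = DGammaH")
    case True
    hence "in_component 1 lh \<theta>" "\<theta> \<noteq> 0"
      using \<theta> unfolding theta_condition_def by blast+
    thus ?thesis unfolding bform_eq_chi_B[OF True] by (rule chi_B_self_eq_0_iff[OF _ _ ga gb])
  qed (simp add: bform_eq_B)
  also have "\<dots> \<longleftrightarrow> B a b = 0" by (rule B_self_eq_0_iff[OF ga gb])
  also have "\<dots> \<longleftrightarrow> spec (B a b) lh = 0"
    using B_eq_0_iff_spec_lh[OF ga] degree_less_if_in_component[OF gb]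
      frobenius_t_equivariant_if_in_component[OF gb] by blast
  finally show ?thesis .
qed

lemma bform_eq_0_if_spec_B_0:
  assumes ga: "in_component t lh a" and ga': "in_component t lh a'" and gb: "in_component t (- lh) b'"
    and z: "spec (B a b') lh = 0"
  shows "bform \<delta> q t n \<gamma> \<theta> a (a' + b') = 0"
proof -
  have da': "degree a' < n"
    and fa': "frobenius_t_equivariant a'"
      using ga' frobenius_t_equivariant_if_in_component by (auto simp: in_component_def)
  have db: "degree b' < n"
    and fb: "frobenius_t_equivariant b'"
      using gb frobenius_t_equivariant_if_in_component by (auto simp: in_component_def)
  have z1: "B a b' = 0" using B_eq_0_iff_spec_lh[OF ga db fb] z by simp
  have z2: "B a a' = 0" by (rule B_eq_0_on_h[OF ga ga'])
  have "B a (a' + b') = 0"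
    by (rule poly_eq_0_if_spec_eq_0[OF degree_B])
      (simp add: spec_B_add_right[OF da' fa' db fb] z1 z2 spec_0)
  show ?thesis
  proof (cases "\<delta> = DGammaH")
    case True
    show ?thesis unfolding bform_eq_chi_B[OF True] \<open>B a (a' + b') = 0\<close> by (rule rmult_0_right)
  next
    case False
    show ?thesis unfolding bform_eq_B[OF False] by fact
  qed
qed

lemma B_0_right: "B x 0 = 0"
proof (rule poly_eq_0_if_spec_eq_0[OF degree_B])
  fix k
  have f0: "frobenius_t_equivariant 0" by (simp add: frobenius_t_equivariant_def spec_0 q_pos)
  have d0: "degree (0::'b poly) < n" using n1 by simp
  have "orbit 0 (- k) = (\<lambda>u. 0)" by (rule ext) (simp add: orbit_def spec_0 q_pos)
  moreover have "spec (B x 0) k = orbit_form \<delta> \<gamma> (orbit x k) (orbit 0 (- k))"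
    by (rule spec_plain_form[OF d0 f0])
  ultimately show "spec (B x 0) k = 0" by (simp add: orbit_form_zero_right)
qed

lemma in_component_if_subspace_h:
  "ksubspace n (Kid q n \<eta> ls h) (Jid q t n \<eta> ls h) A \<Longrightarrow> x \<in> A
      \<Longrightarrow> in_component t lh x"
  using in_component_if_Jid[of x ls h] by (auto simp: ksubspace_def)

lemma in_component_if_subspace_mh:
  "ksubspace n (Kid q n \<eta> ls mh) (Jid q t n \<eta> ls mh) A \<Longrightarrow> x \<in> A
      \<Longrightarrow> in_component t (- lh) x"
  using in_component_if_Jid[of x ls mh] in_component_cyc_cong[OF mu_h(2)] by (auto simp: ksubspace_def)

text \<open>Scaling \<open>b\<close> by \<open>c \<in> \<K>_\<mu>(h)\<close> multiplies the spectral value of \<open>[a,b]\<close> at \<open>l\<^sub>h\<close> by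
  the value of \<open>c\<close> at \<open>-l\<^sub>h\<close>, which ranges over the whole field \<open>subfield d\<^sub>h\<close>.\<close>

lemma spec_B_image_subspace:
  assumes V: "ksubspace n (Kid q n \<eta> ls mh) (Jid q t n \<eta> ls mh) V"
    and a: "in_component t lh a" and b0: "b0 \<in> V" "spec (B a b0) lh \<noteq> 0"
  shows "(\<lambda>b. spec (B a b) lh) ` V = subfield dh"
proof
  have in_V: "in_component t (- lh) b" if "b \<in> V" for b
    using in_component_if_subspace_mh[OF V that] .
  have value_in: "spec (B a b) lh \<in> subfield dh" if "b \<in> V" for b
    using spec_B_in_subfield[OF frobenius_t_equivariant_if_in_component[OF a]
        degree_less_if_in_component[OF in_V] frobenius_t_equivariant_if_in_component[OF in_V]] that
    by blast
  thus "(\<lambda>b. spec (B a b) lh) ` V \<subseteq> subfield dh" by blast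
  show "subfield dh \<subseteq> (\<lambda>b. spec (B a b) lh) ` V"
  proof
    fix z assume z: "z \<in> subfield dh"
    let ?u = "spec (B a b0) lh"
    have "in_coset (int (ls ! mh)) (- lh)"
      using in_coset_self[of "- lh"] mu_h(2) by (simp add: in_coset_def)
    hence "(\<lambda>x. spec x (- lh)) ` Kid q n \<eta> ls mh = subfield dh"
      using spec_image_Kid dd_mh by simp
    moreover have "z / ?u \<in> subfield dh" using subfield_divide[OF z value_in[OF b0(1)]] .
    ultimately obtain c where c: "c \<in> Kid q n \<eta> ls mh" "spec c (- lh) = z / ?u" by force
    have "spec (B a (rmult n c b0)) lh = spec c (- lh) * ?u"
      using in_V[OF b0(1)] degree_less_if_in_component frobenius_t_equivariant_if_in_component
      by (intro spec_B_scale_right[OF in_component_if_Kid[OF c(1)]]) blast+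
    also have "\<dots> = z" using c(2) b0(2) by simp
    finally show "z \<in> (\<lambda>b. spec (B a b) lh) ` V"
      using V c(1) b0(1) unfolding ksubspace_def by force
  qed
qed

lemma card_spec_B_kernel:
  assumes V: "ksubspace n (Kid q n \<eta> ls mh) (Jid q t n \<eta> ls mh) V"
    and card_V: "card V = q ^ (dh * r)" and r: "r \<ge> 1"
    and a: "in_component t lh a" and b0: "b0 \<in> V" "spec (B a b0) lh \<noteq> 0"
  shows "card {b\<in>V. spec (B a b) lh = 0} = q ^ (dh * (r - 1))"
proof -
  have "finite V" by (rule card_ge_0_finite) (simp add: card_V q_pos)
  moreover have "spec (B a (x + y)) lh = spec (B a x) lh + spec (B a y) lh" if "x \<in> V" "y \<in> V"
    for x y
    using in_component_if_subspace_mh[OF V] that degree_less_if_in_component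
      frobenius_t_equivariant_if_in_component
    by (intro spec_B_add_right) blast+
  ultimately have "q ^ (dh * r) = card {b\<in>V. spec (B a b) lh = 0} * q ^ dh"
    using card_eq_card_kernel_mult_card_image[of V "\<lambda>b. spec (B a b) lh"] V card_V
    by (simp add: ksubspace_def spec_B_image_subspace[OF V a b0] card_subfield_dd)
  moreover have "q ^ (dh * r) = q ^ (dh * (r - 1)) * q ^ dh"
    using r by (simp flip: power_add) (simp add: algebra_simps flip: mult_Suc_right)
  ultimately show ?thesis using q_pos by simp
qed

lemma direct_sum_unique:
  assumes "in_component t lh a" "in_component t lh a'" "in_component t (- lh) b" "in_component t (- lh) b'"
    and e: "a + b = a' + b'"
  shows "a = a'"
proof -
  have ga: "in_component t lh (a - a')" using assms in_component_diff by blast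
  have gb: "in_component t (- lh) (b' - b)" using assms in_component_diff by blast
  have eq: "a - a' = b' - b" using e by (simp add: algebra_simps)
  have "a - a' = 0"
  proof (rule poly_eq_0_if_spec_eq_0)
    show "degree (a - a') < n" using ga by (simp add: in_component_def)
    fix k show "spec (a - a') k = 0"
    proof (cases "in_coset lh k")
      case True
      hence "\<not> in_coset (- lh) k" by (rule coset_disjoint_uminus)
      hence "spec (b' - b) k = 0" using gb by (simp add: in_component_def)
      thus ?thesis using eq by simp
    next
      case False thus ?thesis using ga by (simp add: in_component_def)
    qed
  qed
  thus ?thesis by simp
qed

lemma nondegenerate_witness:
  assumes A: "ksubspace n (Kid q n \<eta> ls h) (Jid q t n \<eta> ls h) A"
    and A': "ksubspace n (Kid q n \<eta> ls mh) (Jid q t n \<eta> ls mh) A'"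
    and nondeg: "\<forall>x\<in>dsum A A'. x \<noteq> 0 \<longrightarrow>
        (\<exists>y\<in>dsum A A'. bform \<delta> q t n \<gamma> \<theta> x y \<noteq> 0)"
    and a: "a \<in> A" "a \<noteq> 0"
  shows "\<exists>b\<in>A'. spec (B a b) lh \<noteq> 0"
proof (rule ccontr)
  assume none: "\<not> ?thesis"
  have "a \<in> dsum A A'" using a(1) A' unfolding dsum_def ksubspace_def by force
  then obtain a' b where "a' \<in> A" "b \<in> A'" "bform \<delta> q t n \<gamma> \<theta> a (a' + b)
      \<noteq> 0"
    using nondeg a(2) unfolding dsum_def by blast
  moreover have "bform \<delta> q t n \<gamma> \<theta> a (a' + b) = 0" if "a' \<in> A" "b \<in> A'"
    for a' b
    using none that in_component_if_subspace_h[OF A] in_component_if_subspace_mh[OF A'] a(1)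
    by (intro bform_eq_0_if_spec_B_0) auto
  ultimately show False by blast
qed

lemma card_isotropic_partners:
  assumes theta: "theta_condition \<theta>"
    and A: "ksubspace n (Kid q n \<eta> ls h) (Jid q t n \<eta> ls h) A"
    and A': "ksubspace n (Kid q n \<eta> ls mh) (Jid q t n \<eta> ls mh) A'" "kdim n (Kid q n \<eta> ls mh)
        A' r"
    and r: "r \<ge> 1"
    and nondeg: "\<forall>x\<in>dsum A A'. x \<noteq> 0 \<longrightarrow>
        (\<exists>y\<in>dsum A A'. bform \<delta> q t n \<gamma> \<theta> x y \<noteq> 0)"
    and a: "a \<in> A" "a \<noteq> 0"
  shows "card {b\<in>A'. b \<noteq> 0 \<and> bform \<delta> q t n \<gamma> \<theta> (a + b) (a + b) = 0}
      = q ^ (dh * (r - 1)) - 1"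
proof -
  obtain b0 where b0: "b0 \<in> A'" "spec (B a b0) lh \<noteq> 0"
    using nondegenerate_witness[OF A A'(1) nondeg a] by blast
  have "card A' = q ^ (dh * r)" using card_subspace[OF A'] by (simp add: dd_mh)
  hence kernel: "card {b\<in>A'. spec (B a b) lh = 0} = q ^ (dh * (r - 1))"
    using card_spec_B_kernel[OF A'(1) _ r in_component_if_subspace_h[OF A a(1)] b0] by blast
  have "{b\<in>A'. b \<noteq> 0 \<and> bform \<delta> q t n \<gamma> \<theta> (a + b) (a + b) = 0}
      = {b\<in>A'. spec (B a b) lh = 0} - {0}"
    using isotropic_iff_spec_B[OF in_component_if_subspace_h[OF A a(1)]
        in_component_if_subspace_mh[OF A'(1)] theta] by auto
  moreover have "0 \<in> {b\<in>A'. spec (B a b) lh = 0}"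
    using A'(1) by (simp add: ksubspace_def B_0_right spec_0)
  moreover have "finite A'" by (rule card_ge_0_finite) (simp add: \<open>card A' = _\<close> q_pos)
  ultimately show ?thesis using kernel by (simp add: card_Diff_singleton)
qed

end

theorem proposition3p8:
  fixes p q k n t N :: nat and \<eta> \<gamma> :: "'b::{field,finite}"
    and ls :: "nat list" and M :: "nat set" and h r :: nat
    and \<delta> :: delta and \<theta> :: "'b poly" and Ah Amh :: "'b poly set"
  assumes "prime p" and "k \<ge> 1" and "q = p ^ k"
    and "n \<ge> 1" and "coprime n q" and "t \<ge> 2"
    and "card (UNIV :: 'b set) = q ^ N" and "t dvd N"
    and "primitive_root n \<eta>"
    and "cyc_reps q n ls"
    and "frakM q n ls M" and "h \<in> M"
    and "Tdelta \<delta> p t"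
    and "\<delta> = DGammaH \<longrightarrow>
           \<gamma> \<noteq> 0 \<and> \<gamma> \<in> Fq (q ^ (2 ^ multiplicity 2 t)) \<and>
           \<gamma> + \<gamma> ^ (q ^ (2 ^ (multiplicity 2 t - 1))) = 0 \<and>
           \<theta> \<in> Kid q n \<eta> ls h \<and> \<theta> \<noteq> 0"
    and "ksubspace n (Kid q n \<eta> ls h) (Jid q t n \<eta> ls h) Ah"
    and "ksubspace n (Kid q n \<eta> ls (mu q n ls h)) (Jid q t n \<eta> ls (mu q n ls h)) Amh"
    and "kdim n (Kid q n \<eta> ls h) Ah r"
    and "kdim n (Kid q n \<eta> ls (mu q n ls h)) Amh r"
    and "r \<ge> 2"
    and "\<forall>x\<in>dsum Ah Amh. x \<noteq> 0 \<longrightarrow>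
           (\<exists>y\<in>dsum Ah Amh. bform \<delta> q t n \<gamma> \<theta> x y \<noteq> 0)"
  shows "card {a + b | a b. a \<in> Ah \<and> b \<in> Amh \<and> a \<noteq> 0 \<and> b \<noteq> 0 \<and>
                 bform \<delta> q t n \<gamma> \<theta> (a + b) (a + b) = 0}
         = (q ^ ((r - 1) * dd q n ls h) - 1) * (q ^ (r * dd q n ls h) - 1)"
proof -
  interpret cyclotomic_setting p q k n t N \<eta>
    by unfold_locales (use assms in auto)
  have "h < length ls" "mu q n ls h \<noteq> h"
    using \<open>frakM q n ls M\<close> \<open>h \<in> M\<close> by (auto simp: frakM_def)
  moreover have "gamma_condition \<delta> \<gamma>"
    using \<open>Tdelta \<delta> p t\<close> assms(14) by (intro gamma_condition_if_Tdelta) auto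
  ultimately interpret coset_pair p q k n t N \<eta> ls h \<delta> \<gamma>
    by unfold_locales (use \<open>cyc_reps q n ls\<close> in auto)
  note A = assms(15) and A' = assms(16,18) and nondeg = assms(20)
  have theta: "theta_condition \<theta>"
    using assms(14) in_component_if_Kid by (auto simp: theta_condition_def)
  have card_A: "card Ah = q ^ (dh * r)" using card_subspace[OF A assms(17)] .
  have "finite Ah" "finite Amh"
    using card_A card_subspace[OF A'] q_pos by (auto intro: card_ge_0_finite)
  have "card {a + b | a b. a \<in> Ah \<and> b \<in> Amh \<and> a \<noteq> 0 \<and> b \<noteq> 0 \<and>
                 bform \<delta> q t n \<gamma> \<theta> (a + b) (a + b) = 0}
      = (\<Sum>a\<in>Ah. card {b\<in>Amh. a \<noteq> 0 \<and> b \<noteq> 0 \<and> bform \<delta> q t n \<gamma> \<theta> (a + b) (a + b) = 0})"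
    using \<open>finite Ah\<close> \<open>finite Amh\<close> in_component_if_subspace_h[OF A] in_component_if_subspace_mh[OF A'(1)]
    by (intro card_direct_sum_eq_sum_card) (auto intro: direct_sum_unique)
  also have "\<dots> = (\<Sum>a\<in>Ah - {0}. q ^ (dh * (r - 1)) - 1)"
    using card_isotropic_partners[OF theta A A' _ nondeg] \<open>r \<ge> 2\<close> \<open>finite Ah\<close>
    by (intro sum.mono_neutral_cong_right) auto
  also have "\<dots> = (q ^ (dh * r) - 1) * (q ^ (dh * (r - 1)) - 1)"
    using card_A \<open>finite Ah\<close> A by (simp add: card_Diff_singleton ksubspace_def)
  finally show ?thesis by (simp add: mult.commute)
qed

end
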